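(* Let $(M,\gamma)$ be an $n$-dimensional (pseudo-)Riemannian manifold with local coordinates $q^a$, nondegenerate metric $\gamma_{ab}(q)$, Levi-Civita connection coefficients $\Gamma^a_{bc}(q)$, and let $Q^a(q)$ be a smooth vector field. Consider the autonomous system $$\ddot q^{a}=-\Gamma^{a}_{bc}(q)\dot q^{b}\dot q^{c}-Q^{a}(q).$$ Then each of the following functions is a first integral of this system (i.e. is constant along every solution), provided the stated conditions hold. Indices are raised and lowered with $\gamma$. (CFI 1) Let $\ell\ge 1$ be an integer. Let $L_{(N)ab}(q)$, $N=0,2,\dots,2\ell$, be symmetric tensors such that $L_{(N)(ab;c)}$ is a Killing tensor of order 3 for $N=0,2,\dots,2\ell-2$ and $L_{(2\ell)ab}$ is a Killing tensor of order 2; let $L_{(A)a}(q)$, $A=1,3,\dots,2\ell-1$, be covector fields and $G(q)$ a function satisfying $$L_{(k-1)(a;b)}=-\tfrac{3}{k-1}L_{(k-2)(ab;c)}Q^{c}-kL_{(k)ab},\quad k=2,4,\dots,2\ell,$$ $$\big(L_{(2\ell-1)c}Q^{c}\big)_{,a}=4\ell\,L_{(2\ell)ab}Q^{b},$$ $$\big(L_{(k-2)c}Q^{c}\big)_{,a}=2(k-1)L_{(k-1)ab}Q^{b}-k(k-1)L_{(k)a},\quad k=3,5,\dots,2\ell-1,$$ $$G_{,a}=2L_{(0)ab}Q^{b}-L_{(1)a}.$$ Then $$J^{(3,1)}_{\ell}=\Big(-\sum_{j=0}^{\ell-1}\tfrac{t^{2j+1}}{2j+1}L_{(2j)(ab;c)}\Big)\dot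 q^a\dot q^b\dot q^c+\Big(\sum_{j=0}^{\ell}t^{2j}L_{(2j)ab}\Big)\dot q^a\dot q^b+\Big(\sum_{j=1}^{\ell}t^{2j-1}L_{(2j-1)a}\Big)\dot q^a+\sum_{j=1}^{\ell}\tfrac{t^{2j}}{2j}L_{(2j-1)c}Q^c+G(q)$$ is a first integral. (CFI 2) Let $\ell\ge 0$ be an integer. Let $L_{(0)abc}(q)$ be a totally symmetric Killing tensor of order 3; let $L_{(N)ab}(q)$, $N=1,3,\dots,2\ell+1$, be symmetric tensors such that $L_{(N)(ab;c)}$ is a Killing tensor of order 3 for $N=1,3,\dots,2\ell-1$ and $L_{(2\ell+1)ab}$ is a Killing tensor of order 2; let $L_{(A)a}(q)$, $A=0,2,\dots,2\ell$, be covector fields satisfying $$L_{(0)(a;b)}=3L_{(0)abc}Q^{c}-L_{(1)ab},$$ $$L_{(k-1)(a;b)}=-\tfrac{3}{k-1}L_{(k-2)(ab;c)}Q^{c}-kL_{(k)ab},\quad k=3,5,\dots,2\ell+1,$$ $$\big(L_{(2\ell)c}Q^{c}\big)_{,a}=2(2\ell+1)L_{(2\ell+1)ab}Q^{b},$$ $$\big(L_{(k-2)c}Q^{c}\big)_{,a}=2(k-1)L_{(k-1)ab}Q^{b}-k(k-1)L_{(k)a},\quad k=2,4,\dots,2\ell.$$ Then $$J^{(3,2)}_{\ell}=\Big(L_{(0)abc}-\sum_{j=1}^{\ell}\tfrac{t^{2j}}{2j}L_{(2j-1)(ab;c)}\Big)\dot q^a\dot q^b\dot q^c+\Big(\sum_{j=0}^{\ell}t^{2j+1}L_{(2j+1)ab}\Big)\dot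 q^a\dot q^b+\Big(\sum_{j=0}^{\ell}t^{2j}L_{(2j)a}\Big)\dot q^a+\sum_{j=0}^{\ell}\tfrac{t^{2j+1}}{2j+1}L_{(2j)c}Q^c$$ is a first integral. (CFI 3) Let $\lambda\neq0$ be a constant, $L_{ab}(q)$ a symmetric tensor such that $L_{(ab;c)}$ is a Killing tensor of order 3, and $L_a(q)$ a covector field satisfying $$L_{(a;b)}=-\tfrac{3}{\lambda}L_{(ab;c)}Q^{c}-\lambda L_{ab},\qquad (L_cQ^c)_{,a}=2\lambda L_{ab}Q^b-\lambda^2L_a.$$ Then $$I^{(3)}_{e}=e^{\lambda t}\big(-L_{(ab;c)}\dot q^a\dot q^b\dot q^c+\lambda L_{ab}\dot q^a\dot q^b+\lambda L_a\dot q^a+L_aQ^a\big)$$ is a first integral.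
   Context: Einstein summation convention is used; a comma denotes a partial derivative, a semicolon denotes the covariant derivative of the Levi-Civita connection of $\gamma$, and round brackets around indices denote symmetrization (with weight $1/m!$). A Killing tensor of order $m$ is a totally symmetric covariant tensor $C_{a_1\dots a_m}$ with $C_{(a_1\dots a_m;b)}=0$. A first integral is a function of $(t,q,\dot q)$ whose total time derivative vanishes along every solution of the system. *)

theory Defs
  imports "HOL-Analysis.Analysis"
begin

text \<open>Everything is done in one coordinate chart: an open set U of real^'n
(the index type 'n is an arbitrary finite type, so n = CARD('n)).\<close>

type_synonym 'n pt = "real^'n"

definition pd :: "('n::finite pt \<Rightarrow> real) \<Rightarrow> 'n \<Rightarrow> 'n pt \<Rightarrow> real" where
  "pd f c x = frechet_derivative f (at x) (axis c 1)"

coinductive smooth_on_chart :: "'n::finite pt set \<Rightarrow> ('n pt \<Rightarrow> real) \<Rightarrow> bool" where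
  "\<lbrakk>\<forall>x\<in>U. f differentiable (at x); \<forall>c. smooth_on_chart U (pd f c)\<rbrakk>
     \<Longrightarrow> smooth_on_chart U f"

definition smooth1 :: "'n::finite pt set \<Rightarrow> ('n pt \<Rightarrow> 'n \<Rightarrow> real) \<Rightarrow> bool" where
  "smooth1 U T \<longleftrightarrow> (\<forall>a. smooth_on_chart U (\<lambda>x. T x a))"

definition smooth2 :: "'n::finite pt set \<Rightarrow> ('n pt \<Rightarrow> 'n \<Rightarrow> 'n \<Rightarrow> real) \<Rightarrow> bool" where
  "smooth2 U T \<longleftrightarrow> (\<forall>a b. smooth_on_chart U (\<lambda>x. T x a b))"

definition smooth3 :: "'n::finite pt set \<Rightarrow> ('n pt \<Rightarrow> 'n \<Rightarrow> 'n \<Rightarrow> 'n \<Rightarrow> real) \<Rightarrow> bool" where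
  "smooth3 U T \<longleftrightarrow> (\<forall>a b c. smooth_on_chart U (\<lambda>x. T x a b c))"

definition metric_on :: "'n::finite pt set \<Rightarrow> ('n pt \<Rightarrow> real^'n^'n) \<Rightarrow> bool" where
  "metric_on U g \<longleftrightarrow> open U \<and> smooth2 U (\<lambda>x a b. g x $ a $ b)
     \<and> (\<forall>x\<in>U. transpose (g x) = g x \<and> det (g x) \<noteq> 0)"

definition christoffel :: "('n::finite pt \<Rightarrow> real^'n^'n) \<Rightarrow> 'n pt \<Rightarrow> 'n \<Rightarrow> 'n \<Rightarrow> 'n \<Rightarrow> real" where
  "christoffel g x a b c =
     (\<Sum>d\<in>UNIV. matrix_inv (g x) $ a $ d *
        (pd (\<lambda>y. g y $ d $ c) b x + pd (\<lambda>y. g y $ d $ b) c x - pd (\<lambda>y. g y $ b $ c) d x)) / 2"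

text \<open>Covariant derivatives; the derivative index is the last one.\<close>
definition cd1 :: "('n::finite pt \<Rightarrow> real^'n^'n) \<Rightarrow> ('n pt \<Rightarrow> 'n \<Rightarrow> real) \<Rightarrow> 'n pt \<Rightarrow> 'n \<Rightarrow> 'n \<Rightarrow> real" where
  "cd1 g w x a b = pd (\<lambda>y. w y a) b x - (\<Sum>c\<in>UNIV. christoffel g x c a b * w x c)"

definition cd2 :: "('n::finite pt \<Rightarrow> real^'n^'n) \<Rightarrow> ('n pt \<Rightarrow> 'n \<Rightarrow> 'n \<Rightarrow> real) \<Rightarrow> 'n pt \<Rightarrow> 'n \<Rightarrow> 'n \<Rightarrow> 'n \<Rightarrow> real" where
  "cd2 g T x a b c = pd (\<lambda>y. T y a b) c x
     - (\<Sum>d\<in>UNIV. christoffel g x d c a * T x d b)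
     - (\<Sum>d\<in>UNIV. christoffel g x d c b * T x a d)"

definition cd3 :: "('n::finite pt \<Rightarrow> real^'n^'n) \<Rightarrow> ('n pt \<Rightarrow> 'n \<Rightarrow> 'n \<Rightarrow> 'n \<Rightarrow> real) \<Rightarrow> 'n pt \<Rightarrow> 'n \<Rightarrow> 'n \<Rightarrow> 'n \<Rightarrow> 'n \<Rightarrow> real" where
  "cd3 g T x a b c d = pd (\<lambda>y. T y a b c) d x
     - (\<Sum>e\<in>UNIV. christoffel g x e d a * T x e b c)
     - (\<Sum>e\<in>UNIV. christoffel g x e d b * T x a e c)
     - (\<Sum>e\<in>UNIV. christoffel g x e d c * T x a b e)"

definition sym2 :: "('n \<Rightarrow> 'n \<Rightarrow> real) \<Rightarrow> 'n \<Rightarrow> 'n \<Rightarrow> real" where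
  "sym2 T a b = (T a b + T b a) / 2"

definition sym3 :: "('n \<Rightarrow> 'n \<Rightarrow> 'n \<Rightarrow> real) \<Rightarrow> 'n \<Rightarrow> 'n \<Rightarrow> 'n \<Rightarrow> real" where
  "sym3 T a b c = (\<Sum>p\<in>{p. p permutes {..<3::nat}}.
       T ([a,b,c] ! p 0) ([a,b,c] ! p 1) ([a,b,c] ! p 2)) / fact 3"

definition sym4 :: "('n \<Rightarrow> 'n \<Rightarrow> 'n \<Rightarrow> 'n \<Rightarrow> real) \<Rightarrow> 'n \<Rightarrow> 'n \<Rightarrow> 'n \<Rightarrow> 'n \<Rightarrow> real" where
  "sym4 T a b c d = (\<Sum>p\<in>{p. p permutes {..<4::nat}}.
       T ([a,b,c,d] ! p 0) ([a,b,c,d] ! p 1) ([a,b,c,d] ! p 2) ([a,b,c,d] ! p 3)) / fact 4"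

definition symcd2 :: "('n::finite pt \<Rightarrow> real^'n^'n) \<Rightarrow> ('n pt \<Rightarrow> 'n \<Rightarrow> 'n \<Rightarrow> real) \<Rightarrow> 'n pt \<Rightarrow> 'n \<Rightarrow> 'n \<Rightarrow> 'n \<Rightarrow> real" where
  "symcd2 g L x = sym3 (cd2 g L x)"

definition killing2 :: "'n::finite pt set \<Rightarrow> ('n pt \<Rightarrow> real^'n^'n) \<Rightarrow> ('n pt \<Rightarrow> 'n \<Rightarrow> 'n \<Rightarrow> real) \<Rightarrow> bool" where
  "killing2 U g C \<longleftrightarrow> (\<forall>x\<in>U. \<forall>a b. C x a b = C x b a)
     \<and> (\<forall>x\<in>U. \<forall>a b c. sym3 (cd2 g C x) a b c = 0)"

definition killing3 :: "'n::finite pt set \<Rightarrow> ('n pt \<Rightarrow> real^'n^'n) \<Rightarrow> ('n pt \<Rightarrow> 'n \<Rightarrow> 'n \<Rightarrow> 'n \<Rightarrow> real) \<Rightarrow> bool" where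
  "killing3 U g C \<longleftrightarrow> (\<forall>x\<in>U. \<forall>a b c. C x a b c = C x b a c \<and> C x a b c = C x a c b)
     \<and> (\<forall>x\<in>U. \<forall>a b c d. sym4 (cd3 g C x) a b c d = 0)"

definition is_solution :: "'n::finite pt set \<Rightarrow> ('n pt \<Rightarrow> real^'n^'n) \<Rightarrow> ('n pt \<Rightarrow> real^'n)
     \<Rightarrow> real set \<Rightarrow> (real \<Rightarrow> real^'n) \<Rightarrow> (real \<Rightarrow> real^'n) \<Rightarrow> bool" where
  "is_solution U g Q I q v \<longleftrightarrow> open I \<and> (\<forall>t\<in>I. q t \<in> U
     \<and> (q has_vector_derivative v t) (at t)
     \<and> (v has_vector_derivative
          (\<chi> a. - (\<Sum>b\<in>UNIV. \<Sum>c\<in>UNIV. christoffel g (q t) a b c * v t $ b * v t $ c) - Q (q t) $ a)) (at t))"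

definition first_integral :: "'n::finite pt set \<Rightarrow> ('n pt \<Rightarrow> real^'n^'n) \<Rightarrow> ('n pt \<Rightarrow> real^'n)
     \<Rightarrow> (real \<Rightarrow> 'n pt \<Rightarrow> real^'n \<Rightarrow> real) \<Rightarrow> bool" where
  "first_integral U g Q J \<longleftrightarrow> (\<forall>I q v. is_solution U g Q I q v \<longrightarrow>
     (\<forall>t\<in>I. ((\<lambda>s. J s (q s) (v s)) has_real_derivative 0) (at t)))"

end

theory Submission
  imports Defs
begin

text \<open>Along a solution, the time derivative of a tensor field contracted with the velocity
  is the symmetrized covariant derivative contracted with one more velocity, minus the
  contractions with Q: the Christoffel terms of the equation of motion are exactly those of
  the covariant derivative. The Killing conditions therefore make the cubic parts of the
  candidate integrals evolve only through Q, and what remains of dJ/dt is a polynomial in t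
  whose coefficients the hypotheses make telescope (for the exponential integral, cancel
  against the derivative of the factor).\<close>

section \<open>Differentiability in the chart\<close>

lemma smooth_on_chart_differentiable:
  "smooth_on_chart U f \<Longrightarrow> x \<in> U \<Longrightarrow> f differentiable (at x)"
  by (erule smooth_on_chart.cases) auto

lemma smooth_on_chart_pd: "smooth_on_chart U f \<Longrightarrow> smooth_on_chart U (pd f c)"
  by (erule smooth_on_chart.cases) auto

lemma smooth1_differentiable: "smooth1 U W \<Longrightarrow> x \<in> U \<Longrightarrow> (\<lambda>y. W y a) differentiable (at x)"
  unfolding smooth1_def by (auto intro: smooth_on_chart_differentiable)

lemma smooth2_differentiable: "smooth2 U T \<Longrightarrow> x \<in> U \<Longrightarrow> (\<lambda>y. T y a b) differentiable (at x)"
  unfolding smooth2_def by (auto intro: smooth_on_chart_differentiable)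

lemma smooth2_pd_differentiable:
  "smooth2 U T \<Longrightarrow> x \<in> U \<Longrightarrow> (\<lambda>y. pd (\<lambda>y. T y a b) c y) differentiable (at x)"
  unfolding smooth2_def by (auto intro: smooth_on_chart_differentiable smooth_on_chart_pd)

lemma smooth3_differentiable: "smooth3 U C \<Longrightarrow> x \<in> U \<Longrightarrow> (\<lambda>y. C y a b c) differentiable (at x)"
  unfolding smooth3_def by (auto intro: smooth_on_chart_differentiable)

lemma has_vector_derivative_component:
  assumes "(v has_vector_derivative w) (at t)"
  shows "((\<lambda>s. v s $ a) has_real_derivative w $ a) (at t)"
proof -
  have "((\<lambda>s. v s $ a) has_derivative (\<lambda>h. (h *\<^sub>R w) $ a)) (at t)"
    using bounded_linear.has_derivative[OF bounded_linear_vec_nth, of v "\<lambda>h. h *\<^sub>R w" "at t" a] assms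
    by (simp add: has_vector_derivative_def)
  then show ?thesis by (rule has_derivative_imp_has_field_derivative) simp
qed

lemma DERIV_chain_pd:
  fixes f :: "real^'n::finite \<Rightarrow> real"
  assumes f: "f differentiable (at (q t))" and q: "(q has_vector_derivative w) (at t)"
  shows "((\<lambda>s. f (q s)) has_real_derivative (\<Sum>c\<in>UNIV. pd f c (q t) * w $ c)) (at t)"
proof -
  let ?f' = "frechet_derivative f (at (q t))"
  have fd: "(f has_derivative ?f') (at (q t))" using f frechet_derivative_works by blast
  then have lin: "linear ?f'" by (rule has_derivative_linear)
  have "?f' w = ?f' (\<Sum>c\<in>UNIV. w $ c *\<^sub>R axis c 1)"
    using basis_expansion[of w] by (simp add: scalar_mult_eq_scaleR)
  also have "\<dots> = (\<Sum>c\<in>UNIV. pd f c (q t) * w $ c)"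
    using lin by (simp add: linear_sum linear_scale pd_def mult.commute)
  finally have "?f' (h *\<^sub>R w) = h * (\<Sum>c\<in>UNIV. pd f c (q t) * w $ c)" for h
    using lin by (simp add: linear_scale)
  moreover have "((\<lambda>s. f (q s)) has_derivative (\<lambda>h. ?f' (h *\<^sub>R w))) (at t)"
    using has_derivative_compose[OF q[unfolded has_vector_derivative_def] fd] by (simp add: o_def)
  ultimately show ?thesis
    by (auto intro: has_derivative_imp_has_field_derivative)
qed

lemma differentiable_prod_fun:
  fixes f :: "'i \<Rightarrow> 'a::real_normed_vector \<Rightarrow> real"
  assumes "finite S" "\<And>i. i \<in> S \<Longrightarrow> f i differentiable (at x)"
  shows "(\<lambda>y. \<Prod>i\<in>S. f i y) differentiable (at x)"
  using assms by (induction S rule: finite_induct) auto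

lemma det_differentiable:
  fixes M :: "real^'m \<Rightarrow> real^'n::finite^'n"
  assumes "\<And>i j. (\<lambda>y. M y $ i $ j) differentiable (at x)"
  shows "(\<lambda>y. det (M y)) differentiable (at x)"
  unfolding det_def
  by (intro differentiable_sum ballI differentiable_mult differentiable_const differentiable_prod_fun assms)
    auto

lemma matrix_inv_cramer:
  fixes A :: "real^'n::finite^'n"
  assumes d: "det A \<noteq> 0"
  shows "matrix_inv A $ i $ j = det (\<chi> r s. if s = i then axis j 1 $ r else A $ r $ s) / det A"
proof -
  have "invertible A" using d invertible_det_nz by blast
  then have "A ** matrix_inv A = mat 1"
    unfolding matrix_inv_def invertible_def by (rule someI_ex[THEN conjunct1])
  then have "A *v (matrix_inv A *v axis j 1) = axis j 1"
    by (simp add: matrix_vector_mul_assoc)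
  then have "matrix_inv A *v axis j 1 = (\<chi> k. det (\<chi> r s. if s = k then axis j 1 $ r else A $ r $ s) / det A)"
    using cramer[OF d] by blast
  moreover have "(matrix_inv A *v axis j 1) $ i = matrix_inv A $ i $ j"
    by (simp add: matrix_vector_mult_def axis_def if_distrib cong: if_cong)
  ultimately show ?thesis by simp
qed

lemma matrix_inv_differentiable:
  fixes A :: "real^'m \<Rightarrow> real^'n::finite^'n"
  assumes U: "open U" "x \<in> U" and d: "\<And>y. y \<in> U \<Longrightarrow> det (A y) \<noteq> 0"
    and diff: "\<And>i j. (\<lambda>y. A y $ i $ j) differentiable (at x)"
  shows "(\<lambda>y. matrix_inv (A y) $ i $ j) differentiable (at x)"
proof -
  let ?F = "\<lambda>y. det (\<chi> r s. if s = i then axis j 1 $ r else A y $ r $ s) / det (A y)"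
  have "?F differentiable (at x)"
  proof (intro differentiable_divide det_differentiable)
    fix r s
    show "(\<lambda>y. (\<chi> r s. if s = i then axis j 1 $ r else A y $ r $ s) $ r $ s) differentiable (at x)"
      by (cases "s = i") (simp_all add: diff)
  qed (use diff d[OF U(2)] in auto)
  then obtain D where "(?F has_derivative D) (at x)" unfolding differentiable_def by blast
  then have "((\<lambda>y. matrix_inv (A y) $ i $ j) has_derivative D) (at x)"
    by (rule has_derivative_transform_within_open[OF _ U]) (simp add: matrix_inv_cramer d)
  then show ?thesis unfolding differentiable_def by blast
qed

lemma christoffel_differentiable:
  assumes g: "metric_on U g" and x: "x \<in> U"
  shows "(\<lambda>y. christoffel g y a b c) differentiable (at x)"
proof -
  have U: "open U" and d: "\<And>y. y \<in> U \<Longrightarrow> det (g y) \<noteq> 0" and gs: "smooth2 U (\<lambda>x a b. g x $ a $ b)"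
    using g unfolding metric_on_def by auto
  note g_diff = smooth2_differentiable[OF gs x] smooth2_pd_differentiable[OF gs x]
  have "(\<lambda>y. matrix_inv (g y) $ i $ j) differentiable (at x)" for i j
    by (rule matrix_inv_differentiable[OF U x d g_diff(1)])
  then show ?thesis unfolding christoffel_def
    by (intro differentiable_divide differentiable_sum ballI differentiable_mult differentiable_add
        differentiable_diff g_diff) auto
qed

lemma symcd2_differentiable:
  assumes g: "metric_on U g" and x: "x \<in> U" and T: "smooth2 U T"
  shows "(\<lambda>y. symcd2 g T y a b c) differentiable (at x)"
  unfolding symcd2_def sym3_def cd2_def
  by (intro differentiable_divide differentiable_sum differentiable_diff ballI differentiable_mult
      smooth2_differentiable[OF T x] smooth2_pd_differentiable[OF T x] christoffel_differentiable[OF g x])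
    (auto intro: finite_permutations)

section \<open>Contractions with symmetrized tensors\<close>

lemma sum_lists_permute:
  assumes p: "p permutes {..<m}"
  shows "(\<Sum>xs\<in>{xs. length xs = m}. F (map (\<lambda>i. xs ! p i) [0..<m])) = (\<Sum>xs\<in>{xs. length xs = m}. F xs)"
proof (rule sum.reindex_bij_witness[where j="\<lambda>xs. map (\<lambda>i. xs ! p i) [0..<m]"
      and i="\<lambda>xs. map (\<lambda>i. xs ! inv p i) [0..<m]"])
  have "\<And>i. i < m \<Longrightarrow> p i < m" "\<And>i. i < m \<Longrightarrow> inv p i < m"
    using permutes_in_image[OF p] permutes_in_image[OF permutes_inv[OF p]] by auto
  moreover have "\<And>i. p (inv p i) = i" "\<And>i. inv p (p i) = i"
    using permutes_inverses[OF p] by auto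
  ultimately show "map (\<lambda>i. map (\<lambda>i. xs ! p i) [0..<m] ! inv p i) [0..<m] = xs"
    and "map (\<lambda>i. map (\<lambda>i. xs ! inv p i) [0..<m] ! p i) [0..<m] = xs"
    if "xs \<in> {xs. length xs = m}" for xs
    using that by (auto intro!: nth_equalityI)
qed auto

lemma sum_lists_symmetrize:
  fixes F :: "'a list \<Rightarrow> real"
  shows "(\<Sum>xs\<in>{xs. length xs = m}.
            (\<Sum>p\<in>{p. p permutes {..<m}}. F (map (\<lambda>i. xs ! p i) [0..<m])) / fact m * (\<Prod>i<m. w (xs ! i)))
       = (\<Sum>xs\<in>{xs. length xs = m}. F xs * (\<Prod>i<m. w (xs ! i)))"
proof -
  let ?P = "{p. p permutes {..<m}}" and ?L = "{xs :: 'a list. length xs = m}"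
  let ?G = "\<lambda>xs. F xs * (\<Prod>i<m. w (xs ! i))"
  have "(\<Prod>i<m. w (xs ! i)) = (\<Prod>i<m. w (map (\<lambda>i. xs ! p i) [0..<m] ! i))"
    if "p \<in> ?P" for p and xs :: "'a list"
    using prod.permute[of p "{..<m}" "\<lambda>i. w (xs ! i)"] that by (simp add: o_def)
  then have "(\<Sum>xs\<in>?L. (\<Sum>p\<in>?P. F (map (\<lambda>i. xs ! p i) [0..<m])) / fact m * (\<Prod>i<m. w (xs ! i)))
      = (\<Sum>p\<in>?P. \<Sum>xs\<in>?L. ?G (map (\<lambda>i. xs ! p i) [0..<m])) / fact m"
    by (simp add: sum_divide_distrib sum_distrib_right sum.swap[where A = ?L])
  also have "\<dots> = (\<Sum>p\<in>?P. \<Sum>xs\<in>?L. ?G xs) / fact m"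
    by (rule arg_cong[where f = "\<lambda>x. x / fact m"], rule sum.cong[OF refl], rule sum_lists_permute) simp
  also have "\<dots> = (\<Sum>xs\<in>?L. ?G xs)"
    by (simp add: card_permutations)
  finally show ?thesis .
qed

lemma sum_UNIV3_lists:
  "(\<Sum>a\<in>UNIV. \<Sum>b\<in>UNIV. \<Sum>c\<in>UNIV. G [a, b, c]) = (\<Sum>xs\<in>{xs. length xs = 3}. G xs :: real)"
proof -
  have "xs = [xs ! 0, xs ! 1, xs ! 2]" if "length xs = 3" for xs :: "'a list"
    using that by (cases xs; cases "tl xs"; cases "tl (tl xs)") (auto simp: numeral_3_eq_3)
  then show ?thesis
    by (simp add: sum.cartesian_product)
      (rule sum.reindex_bij_witness[where j="\<lambda>(a, b, c). [a, b, c]"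
          and i="\<lambda>xs. (xs ! 0, xs ! 1, xs ! 2)"];
       auto)
qed

lemma sum_UNIV4_lists:
  "(\<Sum>a\<in>UNIV. \<Sum>b\<in>UNIV. \<Sum>c\<in>UNIV. \<Sum>d\<in>UNIV. G [a, b, c, d])
     = (\<Sum>xs\<in>{xs. length xs = 4}. G xs :: real)"
proof -
  have "xs = [xs ! 0, xs ! 1, xs ! 2, xs ! 3]" if "length xs = 4" for xs :: "'a list"
    using that by (cases xs; cases "tl xs"; cases "tl (tl xs)"; cases "tl (tl (tl xs))")
      (auto simp: eval_nat_numeral)
  then show ?thesis
    by (simp add: sum.cartesian_product)
      (rule sum.reindex_bij_witness[where j="\<lambda>(a, b, c, d). [a, b, c, d]"
          and i="\<lambda>xs. (xs ! 0, xs ! 1, xs ! 2, xs ! 3)"];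
       auto)
qed

lemma sym2_contract:
  "(\<Sum>a\<in>UNIV. \<Sum>b\<in>UNIV. sym2 T a b * w a * w b) = (\<Sum>a\<in>UNIV. \<Sum>b\<in>UNIV. T a b * w a * w b)"
proof -
  have "(\<Sum>a\<in>UNIV. \<Sum>b\<in>UNIV. T b a * w a * w b) = (\<Sum>a\<in>UNIV. \<Sum>b\<in>UNIV. T a b * w a * w b)"
    by (subst sum.swap) (simp add: mult_ac)
  then show ?thesis
    unfolding sym2_def by (simp add: sum.distrib algebra_simps sum_divide_distrib[symmetric])
qed

lemma sym3_contract:
  "(\<Sum>a\<in>UNIV. \<Sum>b\<in>UNIV. \<Sum>c\<in>UNIV. sym3 T a b c * w a * w b * w c)
     = (\<Sum>a\<in>UNIV. \<Sum>b\<in>UNIV. \<Sum>c\<in>UNIV. T a b c * w a * w b * w c)"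
proof -
  let ?F = "\<lambda>xs. T (xs ! 0) (xs ! 1) (xs ! 2)"
  have w3: "(\<Prod>i<3. w ([a, b, c] ! i)) = w a * w b * w c" for a b c
    by (simp add: eval_nat_numeral)
  have "(\<Sum>a\<in>UNIV. \<Sum>b\<in>UNIV. \<Sum>c\<in>UNIV. sym3 T a b c * w a * w b * w c)
      = (\<Sum>xs\<in>{xs. length xs = 3}.
           (\<Sum>p\<in>{p. p permutes {..<3}}. ?F (map (\<lambda>i. xs ! p i) [0..<3])) / fact 3 * (\<Prod>i<3. w (xs ! i)))"
    unfolding sum_UNIV3_lists[symmetric] w3 by (simp add: sym3_def upt_rec eval_nat_numeral mult.assoc)
  also have "\<dots> = (\<Sum>xs\<in>{xs. length xs = 3}. ?F xs * (\<Prod>i<3. w (xs ! i)))"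
    by (rule sum_lists_symmetrize)
  also have "\<dots> = (\<Sum>a\<in>UNIV. \<Sum>b\<in>UNIV. \<Sum>c\<in>UNIV. T a b c * w a * w b * w c)"
    unfolding sum_UNIV3_lists[symmetric] w3 by (simp add: mult.assoc)
  finally show ?thesis .
qed

lemma sym4_contract:
  "(\<Sum>a\<in>UNIV. \<Sum>b\<in>UNIV. \<Sum>c\<in>UNIV. \<Sum>d\<in>UNIV. sym4 T a b c d * w a * w b * w c * w d)
     = (\<Sum>a\<in>UNIV. \<Sum>b\<in>UNIV. \<Sum>c\<in>UNIV. \<Sum>d\<in>UNIV. T a b c d * w a * w b * w c * w d)"
proof -
  let ?F = "\<lambda>xs. T (xs ! 0) (xs ! 1) (xs ! 2) (xs ! 3)"
  have w4: "(\<Prod>i<4. w ([a, b, c, d] ! i)) = w a * w b * w c * w d" for a b c d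
    by (simp add: eval_nat_numeral mult_ac)
  have "(\<Sum>a\<in>UNIV. \<Sum>b\<in>UNIV. \<Sum>c\<in>UNIV. \<Sum>d\<in>UNIV. sym4 T a b c d * w a * w b * w c * w d)
      = (\<Sum>xs\<in>{xs. length xs = 4}.
           (\<Sum>p\<in>{p. p permutes {..<4}}. ?F (map (\<lambda>i. xs ! p i) [0..<4])) / fact 4 * (\<Prod>i<4. w (xs ! i)))"
    unfolding sum_UNIV4_lists[symmetric] w4 by (simp add: sym4_def upt_rec eval_nat_numeral mult.assoc)
  also have "\<dots> = (\<Sum>xs\<in>{xs. length xs = 4}. ?F xs * (\<Prod>i<4. w (xs ! i)))"
    by (rule sum_lists_symmetrize)
  also have "\<dots> = (\<Sum>a\<in>UNIV. \<Sum>b\<in>UNIV. \<Sum>c\<in>UNIV. \<Sum>d\<in>UNIV. T a b c d * w a * w b * w c * w d)"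
    unfolding sum_UNIV4_lists[symmetric] w4 by (simp add: mult.assoc)
  finally show ?thesis .
qed

definition lin_form :: "('n::finite pt \<Rightarrow> 'n \<Rightarrow> real) \<Rightarrow> 'n pt \<Rightarrow> real^'n \<Rightarrow> real" where
  "lin_form W x w = (\<Sum>a\<in>UNIV. W x a * w $ a)"

definition quad_form :: "('n::finite pt \<Rightarrow> 'n \<Rightarrow> 'n \<Rightarrow> real) \<Rightarrow> 'n pt \<Rightarrow> real^'n \<Rightarrow> real" where
  "quad_form T x w = (\<Sum>a\<in>UNIV. \<Sum>b\<in>UNIV. T x a b * w $ a * w $ b)"

definition cubic_form :: "('n::finite pt \<Rightarrow> 'n \<Rightarrow> 'n \<Rightarrow> 'n \<Rightarrow> real) \<Rightarrow> 'n pt \<Rightarrow> real^'n \<Rightarrow> real" where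
  "cubic_form C x w = (\<Sum>a\<in>UNIV. \<Sum>b\<in>UNIV. \<Sum>c\<in>UNIV. C x a b c * w $ a * w $ b * w $ c)"

definition quad_polar :: "('n::finite pt \<Rightarrow> 'n \<Rightarrow> 'n \<Rightarrow> real) \<Rightarrow> 'n pt \<Rightarrow> real^'n \<Rightarrow> real^'n \<Rightarrow> real" where
  "quad_polar T x w P = (\<Sum>a\<in>UNIV. (\<Sum>b\<in>UNIV. T x a b * P $ b) * w $ a)"

definition cubic_polar ::
    "('n::finite pt \<Rightarrow> 'n \<Rightarrow> 'n \<Rightarrow> 'n \<Rightarrow> real) \<Rightarrow> 'n pt \<Rightarrow> real^'n \<Rightarrow> real^'n \<Rightarrow> real" where
  "cubic_polar C x w P = (\<Sum>a\<in>UNIV. \<Sum>b\<in>UNIV. (\<Sum>c\<in>UNIV. C x a b c * P $ c) * w $ a * w $ b)"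

definition acceleration ::
    "('n::finite pt \<Rightarrow> real^'n^'n) \<Rightarrow> ('n pt \<Rightarrow> real^'n) \<Rightarrow> 'n pt \<Rightarrow> real^'n \<Rightarrow> real^'n" where
  "acceleration g Q x w = (\<chi> a. - (\<Sum>b\<in>UNIV. \<Sum>c\<in>UNIV. christoffel g x a b c * w $ b * w $ c) - Q x $ a)"

lemma lin_form_combination:
  assumes "\<And>a. W x a = \<alpha> * (\<Sum>b\<in>UNIV. T x a b * P $ b) - \<beta> * V x a"
  shows "lin_form W x w = \<alpha> * quad_polar T x w P - \<beta> * lin_form V x w"
  unfolding assms lin_form_def quad_polar_def
  by (simp add: algebra_simps sum_subtractf sum_distrib_left)

lemma lin_form_eq_quad_polar:
  assumes "\<And>a. W x a = \<alpha> * (\<Sum>b\<in>UNIV. T x a b * P $ b)"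
  shows "lin_form W x w = \<alpha> * quad_polar T x w P"
  unfolding assms lin_form_def quad_polar_def by (simp add: algebra_simps sum_distrib_left)

lemma quad_form_combination:
  assumes "\<And>a b. T x a b = \<alpha> * (\<Sum>c\<in>UNIV. C x a b c * P $ c) - \<beta> * S x a b"
  shows "quad_form T x w = \<alpha> * cubic_polar C x w P - \<beta> * quad_form S x w"
  unfolding assms quad_form_def cubic_polar_def
  by (simp add: algebra_simps sum_subtractf sum_distrib_left)

lemma quad_form_sym2: "quad_form (\<lambda>x a b. sym2 (T x) a b) x w = quad_form T x w"
  unfolding quad_form_def by (rule sym2_contract)

lemma cubic_form_symcd2:
  "cubic_form (symcd2 g T) x w = (\<Sum>a\<in>UNIV. \<Sum>b\<in>UNIV. \<Sum>c\<in>UNIV. cd2 g T x a b c * w $ a * w $ b * w $ c)"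
  unfolding cubic_form_def symcd2_def by (rule sym3_contract)

lemma cubic_form_symcd2_killing2: "killing2 U g T \<Longrightarrow> x \<in> U \<Longrightarrow> cubic_form (symcd2 g T) x w = 0"
  unfolding killing2_def cubic_form_def symcd2_def by simp

text \<open>The left-hand sides below are what the product rule gives for the time derivative of the
  contractions along a curve with velocity w whose acceleration obeys the equation of motion;
  the Christoffel part of that acceleration turns partial into covariant derivatives.\<close>

lemma lin_form_product_rule_covariant:
  "(\<Sum>a\<in>UNIV. (\<Sum>c\<in>UNIV. pd (\<lambda>y. W y a) c x * w $ c) * w $ a + acceleration g Q x w $ a * W x a)
     = quad_form (cd1 g W) x w - lin_form W x (Q x)"
proof -
  have "(\<Sum>a\<in>UNIV. W x a * (\<Sum>b\<in>UNIV. \<Sum>c\<in>UNIV. christoffel g x a b c * w $ b * w $ c))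
      = (\<Sum>a\<in>UNIV. \<Sum>b\<in>UNIV. (\<Sum>c\<in>UNIV. christoffel g x c a b * W x c) * w $ a * w $ b)"
    unfolding sum_distrib_left sum_distrib_right sum.cartesian_product
    by (rule sum.reindex_bij_witness[where i="\<lambda>(a, b, c). (c, a, b)"
          and j="\<lambda>(a, b, c). (b, c, a)"])
      (auto simp: mult_ac)
  then show ?thesis
    unfolding quad_form_def lin_form_def cd1_def acceleration_def
    by (simp add: sum.distrib sum_subtractf algebra_simps sum_distrib_left sum_distrib_right)
qed

lemma quad_form_product_rule_covariant:
  "(\<Sum>a\<in>UNIV. \<Sum>b\<in>UNIV. ((\<Sum>c\<in>UNIV. pd (\<lambda>y. T y a b) c x * w $ c) * w $ a
        + acceleration g Q x w $ a * T x a b) * w $ b + acceleration g Q x w $ b * (T x a b * w $ a))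
     = (\<Sum>a\<in>UNIV. \<Sum>b\<in>UNIV. \<Sum>c\<in>UNIV. cd2 g T x a b c * w $ a * w $ b * w $ c)
       - (\<Sum>a\<in>UNIV. \<Sum>b\<in>UNIV. T x a b * (Q x $ a * w $ b + w $ a * Q x $ b))"
proof -
  let ?G = "\<lambda>a. \<Sum>b\<in>UNIV. \<Sum>c\<in>UNIV. christoffel g x a b c * w $ b * w $ c"
  have "(\<Sum>a\<in>UNIV. \<Sum>b\<in>UNIV. T x a b * ?G a * w $ b)
      = (\<Sum>a\<in>UNIV. \<Sum>b\<in>UNIV. \<Sum>c\<in>UNIV. (\<Sum>d\<in>UNIV. christoffel g x d c a * T x d b) * w $ a * w $ b * w $ c)"
    unfolding sum_distrib_left sum_distrib_right sum.cartesian_product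
    by (rule sum.reindex_bij_witness[where i="\<lambda>(a, b, c, d). (d, b, c, a)"
          and j="\<lambda>(a, b, c, d). (d, b, c, a)"])
      (auto simp: mult_ac)
  moreover have "(\<Sum>a\<in>UNIV. \<Sum>b\<in>UNIV. T x a b * w $ a * ?G b)
      = (\<Sum>a\<in>UNIV. \<Sum>b\<in>UNIV. \<Sum>c\<in>UNIV. (\<Sum>d\<in>UNIV. christoffel g x d c b * T x a d) * w $ a * w $ b * w $ c)"
    unfolding sum_distrib_left sum_distrib_right sum.cartesian_product
    by (rule sum.reindex_bij_witness[where i="\<lambda>(a, b, c, d). (a, d, c, b)"
          and j="\<lambda>(a, b, c, d). (a, d, c, b)"])
      (auto simp: mult_ac)
  ultimately show ?thesis
    unfolding cd2_def acceleration_def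
    by (simp add: sum.distrib sum_subtractf algebra_simps sum_distrib_left sum_distrib_right)
qed

lemma cubic_form_product_rule_covariant:
  "(\<Sum>a\<in>UNIV. \<Sum>b\<in>UNIV. \<Sum>c\<in>UNIV. (((\<Sum>d\<in>UNIV. pd (\<lambda>y. C y a b c) d x * w $ d) * w $ a
        + acceleration g Q x w $ a * C x a b c) * w $ b + acceleration g Q x w $ b * (C x a b c * w $ a)) * w $ c
        + acceleration g Q x w $ c * (C x a b c * w $ a * w $ b))
     = (\<Sum>a\<in>UNIV. \<Sum>b\<in>UNIV. \<Sum>c\<in>UNIV. \<Sum>d\<in>UNIV. cd3 g C x a b c d * w $ a * w $ b * w $ c * w $ d)
       - (\<Sum>a\<in>UNIV. \<Sum>b\<in>UNIV. \<Sum>c\<in>UNIV. C x a b c *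
          (Q x $ a * w $ b * w $ c + w $ a * Q x $ b * w $ c + w $ a * w $ b * Q x $ c))"
proof -
  let ?G = "\<lambda>a. \<Sum>b\<in>UNIV. \<Sum>c\<in>UNIV. christoffel g x a b c * w $ b * w $ c"
  have "(\<Sum>a\<in>UNIV. \<Sum>b\<in>UNIV. \<Sum>c\<in>UNIV. C x a b c * ?G a * w $ b * w $ c)
      = (\<Sum>a\<in>UNIV. \<Sum>b\<in>UNIV. \<Sum>c\<in>UNIV. \<Sum>d\<in>UNIV.
           (\<Sum>e\<in>UNIV. christoffel g x e d a * C x e b c) * w $ a * w $ b * w $ c * w $ d)"
    unfolding sum_distrib_left sum_distrib_right sum.cartesian_product
    by (rule sum.reindex_bij_witness[where i="\<lambda>(a, b, c, d, e). (e, b, c, d, a)"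
          and j="\<lambda>(a, b, c, d, e). (e, b, c, d, a)"])
      (auto simp: mult_ac)
  moreover have "(\<Sum>a\<in>UNIV. \<Sum>b\<in>UNIV. \<Sum>c\<in>UNIV. C x a b c * w $ a * ?G b * w $ c)
      = (\<Sum>a\<in>UNIV. \<Sum>b\<in>UNIV. \<Sum>c\<in>UNIV. \<Sum>d\<in>UNIV.
           (\<Sum>e\<in>UNIV. christoffel g x e d b * C x a e c) * w $ a * w $ b * w $ c * w $ d)"
    unfolding sum_distrib_left sum_distrib_right sum.cartesian_product
    by (rule sum.reindex_bij_witness[where i="\<lambda>(a, b, c, d, e). (a, e, c, d, b)"
          and j="\<lambda>(a, b, c, d, e). (a, e, c, d, b)"])
      (auto simp: mult_ac)
  moreover have "(\<Sum>a\<in>UNIV. \<Sum>b\<in>UNIV. \<Sum>c\<in>UNIV. C x a b c * w $ a * w $ b * ?G c)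
      = (\<Sum>a\<in>UNIV. \<Sum>b\<in>UNIV. \<Sum>c\<in>UNIV. \<Sum>d\<in>UNIV.
           (\<Sum>e\<in>UNIV. christoffel g x e d c * C x a b e) * w $ a * w $ b * w $ c * w $ d)"
    unfolding sum_distrib_left sum_distrib_right sum.cartesian_product
    by (rule sum.reindex_bij_witness[where i="\<lambda>(a, b, c, d, e). (a, b, e, d, c)"
          and j="\<lambda>(a, b, c, d, e). (a, b, e, d, c)"])
      (auto simp: mult_ac)
  ultimately show ?thesis
    unfolding cd3_def acceleration_def
    by (simp add: sum.distrib sum_subtractf algebra_simps sum_distrib_left sum_distrib_right)
qed


section \<open>Time derivatives along solutions\<close>

locale solution_point =
  fixes U :: "(real^'n::finite) set" and g Q q v t
  assumes Q_smooth: "smooth1 U (\<lambda>x a. Q x $ a)"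
    and in_chart: "q t \<in> U" and q_deriv: "(q has_vector_derivative v t) (at t)"
    and v_deriv: "(v has_vector_derivative acceleration g Q (q t) (v t)) (at t)"
begin

lemma DERIV_position:
  "f differentiable (at (q t)) \<Longrightarrow>
     ((\<lambda>s. f (q s)) has_real_derivative lin_form (\<lambda>y a. pd f a y) (q t) (v t)) (at t)"
  using DERIV_chain_pd[OF _ q_deriv] by (simp add: lin_form_def mult.commute)

lemma lin_form_Q_differentiable:
  assumes "smooth1 U W"
  shows "(\<lambda>y. lin_form W y (Q y)) differentiable (at (q t))"
  unfolding lin_form_def
  by (intro differentiable_sum ballI differentiable_mult smooth1_differentiable[OF assms in_chart]
      smooth1_differentiable[OF Q_smooth in_chart, of _]) auto

lemma DERIV_lin_form:
  assumes "smooth1 U W"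
  shows "((\<lambda>s. lin_form W (q s) (v s)) has_real_derivative
     quad_form (\<lambda>x a b. sym2 (cd1 g W x) a b) (q t) (v t) - lin_form W (q t) (Q (q t))) (at t)"
proof -
  have "((\<lambda>s. \<Sum>a\<in>UNIV. W (q s) a * v s $ a) has_real_derivative
      (\<Sum>a\<in>UNIV. (\<Sum>c\<in>UNIV. pd (\<lambda>y. W y a) c (q t) * v t $ c) * v t $ a
         + acceleration g Q (q t) (v t) $ a * W (q t) a)) (at t)"
    by (intro DERIV_sum DERIV_mult DERIV_chain_pd has_vector_derivative_component
        q_deriv v_deriv smooth1_differentiable[OF assms in_chart])
  then show ?thesis
    by (simp add: lin_form_product_rule_covariant lin_form_def quad_form_sym2)
qed

lemma DERIV_quad_form:
  assumes "smooth2 U T" and symmetric: "\<And>a b. T (q t) a b = T (q t) b a"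
  shows "((\<lambda>s. quad_form T (q s) (v s)) has_real_derivative
     cubic_form (symcd2 g T) (q t) (v t) - 2 * quad_polar T (q t) (v t) (Q (q t))) (at t)"
proof -
  let ?x = "q t" and ?w = "v t" and ?P = "Q (q t)"
  have "((\<lambda>s. quad_form T (q s) (v s)) has_real_derivative
      (\<Sum>a\<in>UNIV. \<Sum>b\<in>UNIV. ((\<Sum>c\<in>UNIV. pd (\<lambda>y. T y a b) c ?x * ?w $ c) * ?w $ a
        + acceleration g Q ?x ?w $ a * T ?x a b) * ?w $ b
        + acceleration g Q ?x ?w $ b * (T ?x a b * ?w $ a))) (at t)"
    unfolding quad_form_def
    by (intro DERIV_sum DERIV_mult DERIV_chain_pd has_vector_derivative_component
        q_deriv v_deriv smooth2_differentiable[OF assms(1) in_chart])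
  moreover have "(\<Sum>a\<in>UNIV. \<Sum>b\<in>UNIV. T ?x a b * (?P $ a * ?w $ b + ?w $ a * ?P $ b))
      = 2 * quad_polar T ?x ?w ?P"
  proof -
    have "(\<Sum>a\<in>UNIV. \<Sum>b\<in>UNIV. T ?x a b * (?P $ a * ?w $ b)) = quad_polar T ?x ?w ?P"
      unfolding quad_polar_def sum_distrib_right
      by (subst sum.swap) (simp add: symmetric mult_ac)
    moreover have "(\<Sum>a\<in>UNIV. \<Sum>b\<in>UNIV. T ?x a b * (?w $ a * ?P $ b)) = quad_polar T ?x ?w ?P"
      unfolding quad_polar_def sum_distrib_right by (simp add: mult_ac)
    ultimately show ?thesis
      by (simp add: distrib_left sum.distrib)
  qed
  ultimately show ?thesis
    by (simp add: quad_form_product_rule_covariant cubic_form_symcd2)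
qed

lemma DERIV_cubic_form_killing3:
  assumes K: "killing3 U g C" and C_diff: "\<And>a b c. (\<lambda>y. C y a b c) differentiable (at (q t))"
  shows "((\<lambda>s. cubic_form C (q s) (v s)) has_real_derivative
     - 3 * cubic_polar C (q t) (v t) (Q (q t))) (at t)"
proof -
  let ?x = "q t" and ?w = "v t" and ?P = "Q (q t)"
  have sym: "C ?x a b c = C ?x b a c" "C ?x a b c = C ?x a c b" for a b c
    using K in_chart unfolding killing3_def by auto
  then have cyclic: "C ?x a b c = C ?x c a b" for a b c
    by metis
  have "((\<lambda>s. cubic_form C (q s) (v s)) has_real_derivative
      (\<Sum>a\<in>UNIV. \<Sum>b\<in>UNIV. \<Sum>c\<in>UNIV. (((\<Sum>d\<in>UNIV. pd (\<lambda>y. C y a b c) d ?x * ?w $ d) * ?w $ a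
        + acceleration g Q ?x ?w $ a * C ?x a b c) * ?w $ b
        + acceleration g Q ?x ?w $ b * (C ?x a b c * ?w $ a)) * ?w $ c
        + acceleration g Q ?x ?w $ c * (C ?x a b c * ?w $ a * ?w $ b))) (at t)"
    unfolding cubic_form_def
    by (intro DERIV_sum DERIV_mult DERIV_chain_pd has_vector_derivative_component
        q_deriv v_deriv C_diff)
  moreover have "(\<Sum>a\<in>UNIV. \<Sum>b\<in>UNIV. \<Sum>c\<in>UNIV. \<Sum>d\<in>UNIV.
      cd3 g C ?x a b c d * ?w $ a * ?w $ b * ?w $ c * ?w $ d) = 0"
    using sym4_contract[of "cd3 g C ?x" "\<lambda>a. ?w $ a"] K in_chart unfolding killing3_def by simp
  moreover have "(\<Sum>a\<in>UNIV. \<Sum>b\<in>UNIV. \<Sum>c\<in>UNIV. C ?x a b c *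
      (?P $ a * ?w $ b * ?w $ c + ?w $ a * ?P $ b * ?w $ c + ?w $ a * ?w $ b * ?P $ c))
      = 3 * cubic_polar C ?x ?w ?P"
  proof -
    let ?R = "\<Sum>a\<in>UNIV. \<Sum>b\<in>UNIV. \<Sum>c\<in>UNIV. C ?x a b c * ?w $ a * ?w $ b * ?P $ c"
    have "(\<Sum>a\<in>UNIV. \<Sum>b\<in>UNIV. \<Sum>c\<in>UNIV. C ?x a b c * (?P $ a * ?w $ b * ?w $ c)) = ?R"
      unfolding sum.cartesian_product
      by (rule sum.reindex_bij_witness[where i="\<lambda>(a, b, c). (c, a, b)" and j="\<lambda>(a, b, c). (b, c, a)"])
        (auto simp: mult_ac cyclic)
    moreover have "(\<Sum>a\<in>UNIV. \<Sum>b\<in>UNIV. \<Sum>c\<in>UNIV. C ?x a b c * (?w $ a * ?P $ b * ?w $ c)) = ?R"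
      unfolding sum.cartesian_product
      by (rule sum.reindex_bij_witness[where i="\<lambda>(a, b, c). (a, c, b)" and j="\<lambda>(a, b, c). (a, c, b)"])
        (auto simp: mult_ac intro: sym(2))
    moreover have "cubic_polar C ?x ?w ?P = ?R"
      unfolding cubic_polar_def by (simp add: sum_distrib_right sum_distrib_left mult_ac)
    ultimately show ?thesis
      by (simp add: distrib_left sum.distrib mult_ac)
  qed
  ultimately show ?thesis
    by (simp add: cubic_form_product_rule_covariant)
qed

end

lemma solution_point_if_is_solution:
  "smooth1 U (\<lambda>x a. Q x $ a) \<Longrightarrow> is_solution U g Q I q v \<Longrightarrow> t \<in> I
     \<Longrightarrow> solution_point U g Q q v t"
  unfolding is_solution_def solution_point_def acceleration_def by auto

section \<open>Telescoping of the time derivatives\<close>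

lemma sum_atLeast1_atMost_shift: "(\<Sum>j\<in>{1..l}. f j) = (\<Sum>j<l. f (Suc j))" for f :: "nat \<Rightarrow> real"
  using sum.atLeast1_atMost_eq[of f l] by simp

lemma sum_atMost_split_last: "(\<Sum>j\<le>l. f j) = (\<Sum>j<l. f j) + f l" for f :: "nat \<Rightarrow> real"
  by (simp add: lessThan_Suc_atMost[symmetric])

lemma J31_derivative_telescopes:
  fixes A E B F H S Wc Pd :: "nat \<Rightarrow> real"
  assumes l: "l \<ge> 1"
    and A_top: "A (2*l) = 0"
    and Wc: "\<And>j. j < l \<Longrightarrow> Wc (2*j+1) = - (3 / real (2*j+1)) * E (2*j) - real (2*j+2) * B (2*j+2)"
    and Pd_top: "Pd (2*l-1) = 4 * real l * F (2*l)"
    and Pd: "\<And>j. Suc j < l \<Longrightarrow>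
      Pd (2*j+1) = 2 * real (2*j+2) * F (2*j+2) - real (2*j+3) * real (2*j+2) * H (2*j+3)"
    and GD: "GD = 2 * F 0 - H 1"
  shows "- (\<Sum>j<l. real (2*j+1) * t^(2*j+1-1) / real (2*j+1) * A (2*j)
       + t^(2*j+1) / real (2*j+1) * (-3 * E (2*j)))
   + (\<Sum>j\<le>l. real (2*j) * t^(2*j-1) * B (2*j) + t^(2*j) * (A (2*j) - 2 * F (2*j)))
   + (\<Sum>j\<in>{1..l}. real (2*j-1) * t^(2*j-1-1) * H (2*j-1) + t^(2*j-1) * (Wc (2*j-1) - S (2*j-1)))
   + (\<Sum>j\<in>{1..l}. real (2*j) * t^(2*j-1) / real (2*j) * S (2*j-1) + t^(2*j) / real (2*j) * Pd (2*j-1))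
   + GD = 0"
proof -
  define \<beta> where "\<beta> j = real (2*j) * t^(2*j-1) * B (2*j)" for j
  define \<phi> where "\<phi> j = 2 * t^(2*j) * F (2*j)" for j
  define \<eta> where "\<eta> j = (if j < l then real (2*j+1) * t^(2*j) * H (2*j+1) else 0)" for j
  let ?r1 = "\<lambda>j. real (2*j+1) * t^(2*j+1-1) / real (2*j+1) * A (2*j) + t^(2*j+1) / real (2*j+1) * (-3 * E (2*j))"
  let ?r2 = "\<lambda>j. real (2*j) * t^(2*j-1) * B (2*j) + t^(2*j) * (A (2*j) - 2 * F (2*j))"
  let ?r3 = "\<lambda>j. real (2*j-1) * t^(2*j-1-1) * H (2*j-1) + t^(2*j-1) * (Wc (2*j-1) - S (2*j-1))"
  let ?r4 = "\<lambda>j. real (2*j) * t^(2*j-1) / real (2*j) * S (2*j-1) + t^(2*j) / real (2*j) * Pd (2*j-1)"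
  have block: "- ?r1 j + ?r2 j + ?r3 (Suc j) + ?r4 (Suc j)
      = (\<beta> j - \<beta> (Suc j)) + (\<phi> (Suc j) - \<phi> j) + (\<eta> j - \<eta> (Suc j))" if j: "j < l" for j
  proof -
    have Pd_j: "t^(2 * Suc j) / real (2 * Suc j) * Pd (2 * Suc j - 1) = \<phi> (Suc j) - \<eta> (Suc j)"
    proof (cases "Suc j = l")
      case True
      then have "Pd (2 * Suc j - 1) = 4 * real (Suc j) * F (2 * Suc j)"
        using Pd_top by simp
      with True show ?thesis by (simp add: \<phi>_def \<eta>_def field_simps)
    next
      case False
      with j have "Suc j < l" by simp
      moreover have "2 * Suc j - 1 = 2*j+1" by simp
      ultimately show ?thesis
        by (simp only: Pd) (simp add: \<phi>_def \<eta>_def field_simps eval_nat_numeral)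
    qed
    have Wc_j: "Wc (2 * Suc j - 1) = - (3 / real (2*j+1)) * E (2*j) - real (2*j+2) * B (2*j+2)"
      using Wc[OF j] by simp
    have \<eta>_j: "\<eta> j = real (2*j+1) * t^(2*j) * H (2*j+1)"
      using j by (simp add: \<eta>_def)
    have powers: "real (2*j+1) * t^(2*j+1-1) / real (2*j+1) = t^(2*j)"
      "real (2 * Suc j) * t ^ (2 * Suc j - 1) / real (2 * Suc j) = t^(2*j+1)"
      "real (2 * Suc j - 1) * t^(2 * Suc j - 1 - 1) = real (2*j+1) * t^(2*j)"
      "t^(2*j+1) / real (2*j+1) * (-3 * E (2*j)) = t^(2*j+1) * (- (3 / real (2*j+1)) * E (2*j))"
      by simp_all
    show ?thesis
      by (simp only: Pd_j Wc_j \<eta>_j powers) (simp add: \<beta>_def \<phi>_def algebra_simps)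
  qed
  have "- (\<Sum>j<l. ?r1 j) + (\<Sum>j\<le>l. ?r2 j) + (\<Sum>j\<in>{1..l}. ?r3 j) + (\<Sum>j\<in>{1..l}. ?r4 j)
      = (\<Sum>j<l. - ?r1 j + ?r2 j + ?r3 (Suc j) + ?r4 (Suc j)) + ?r2 l"
    unfolding sum_atLeast1_atMost_shift sum_atMost_split_last sum.distrib sum_negf by linarith
  also have "\<dots> = (\<Sum>j<l. (\<beta> j - \<beta> (Suc j)) + (\<phi> (Suc j) - \<phi> j) + (\<eta> j - \<eta> (Suc j))) + ?r2 l"
    by (rule arg_cong[where f = "\<lambda>x. x + ?r2 l"], rule sum.cong[OF refl], rule block) simp
  also have "\<dots> = (\<beta> 0 - \<beta> l) + (\<phi> l - \<phi> 0) + (\<eta> 0 - \<eta> l) + ?r2 l"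
    by (simp add: sum.distrib sum_lessThan_telescope sum_lessThan_telescope')
  also have "\<dots> = - GD"
    using A_top GD l by (simp add: \<beta>_def \<phi>_def \<eta>_def)
  finally show ?thesis
    by linarith
qed

lemma J32_derivative_telescopes:
  fixes A E B F H S Wc Pd :: "nat \<Rightarrow> real"
  assumes A_top: "A (2*l+1) = 0"
    and Wc_0: "Wc 0 = 3 * Ec - B 1"
    and Wc: "\<And>j. 1 \<le> j \<Longrightarrow> j \<le> l \<Longrightarrow> Wc (2*j) = - (3 / real (2*j)) * E (2*j-1) - real (2*j+1) * B (2*j+1)"
    and Pd_top: "Pd (2*l) = 2 * real (2*l+1) * F (2*l+1)"
    and Pd: "\<And>j. j < l \<Longrightarrow>
      Pd (2*j) = 2 * real (2*j+1) * F (2*j+1) - real (2*j+2) * real (2*j+1) * H (2*j+2)"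
  shows "(-3 * Ec) - (\<Sum>j\<in>{1..l}. real (2*j) * t^(2*j-1) / real (2*j) * A (2*j-1)
       + t^(2*j) / real (2*j) * (-3 * E (2*j-1)))
   + (\<Sum>j\<le>l. real (2*j+1) * t^(2*j+1-1) * B (2*j+1) + t^(2*j+1) * (A (2*j+1) - 2 * F (2*j+1)))
   + (\<Sum>j\<le>l. real (2*j) * t^(2*j-1) * H (2*j) + t^(2*j) * (Wc (2*j) - S (2*j)))
   + (\<Sum>j\<le>l. real (2*j+1) * t^(2*j+1-1) / real (2*j+1) * S (2*j) + t^(2*j+1) / real (2*j+1) * Pd (2*j))
   = 0"
proof -
  define \<epsilon> where "\<epsilon> j = (if j = 0 then -3 * Ec else 3 * t^(2*j) / real (2*j) * E (2*j-1))" for j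
  define \<eta> where "\<eta> j = real (2*j) * t^(2*j-1) * H (2*j)" for j
  let ?r1 = "\<lambda>j. real (2*j) * t^(2*j-1) / real (2*j) * A (2*j-1) + t^(2*j) / real (2*j) * (-3 * E (2*j-1))"
  let ?r2 = "\<lambda>j. real (2*j+1) * t^(2*j+1-1) * B (2*j+1) + t^(2*j+1) * (A (2*j+1) - 2 * F (2*j+1))"
  let ?r3 = "\<lambda>j. real (2*j) * t^(2*j-1) * H (2*j) + t^(2*j) * (Wc (2*j) - S (2*j))"
  let ?r4 = "\<lambda>j. real (2*j+1) * t^(2*j+1-1) / real (2*j+1) * S (2*j) + t^(2*j+1) / real (2*j+1) * Pd (2*j)"
  have Wc_j: "t^(2*j) * (Wc (2*j) - S (2*j)) = - \<epsilon> j - real (2*j+1) * t^(2*j) * B (2*j+1) - t^(2*j) * S (2*j)"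
    if "j \<le> l" for j
  proof (cases "j = 0")
    case True
    then show ?thesis using Wc_0 by (simp add: \<epsilon>_def algebra_simps)
  next
    case False
    then have "1 \<le> j" by simp
    with False show ?thesis
      unfolding Wc[OF \<open>1 \<le> j\<close> that] \<epsilon>_def by (simp add: algebra_simps)
  qed
  have powers: "real (2 * Suc j) * t ^ (2 * Suc j - 1) / real (2 * Suc j) = t^(2*j+1)"
    "real (2*j+1) * t^(2*j+1-1) / real (2*j+1) = t^(2*j)" for j
    by simp_all
  have block: "- ?r1 (Suc j) + ?r2 j + ?r3 j + ?r4 j = (\<epsilon> (Suc j) - \<epsilon> j) + (\<eta> j - \<eta> (Suc j))"
    if j: "j < l" for j
  proof -
    have "t ^ (2 * Suc j) / real (2 * Suc j) * (-3 * E (2 * Suc j - 1)) = - \<epsilon> (Suc j)"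
      by (simp add: \<epsilon>_def)
    moreover have "t^(2*j+1) / real (2*j+1) * Pd (2*j)
        = 2 * t^(2*j+1) * F (2*j+1) - real (2*j+2) * t^(2*j+1) * H (2*j+2)"
      unfolding Pd[OF j] by (simp add: field_simps)
    ultimately show ?thesis
      using Wc_j[of j] j by (simp only: powers) (simp add: \<eta>_def algebra_simps)
  qed
  have last: "?r2 l + ?r3 l + ?r4 l = - \<epsilon> l + \<eta> l"
  proof -
    have "t^(2*l+1) / real (2*l+1) * Pd (2*l) = 2 * t^(2*l+1) * F (2*l+1)"
      unfolding Pd_top by (simp add: field_simps)
    then show ?thesis
      using Wc_j[of l] A_top by (simp only: powers) (simp add: \<eta>_def algebra_simps)
  qed
  have "(-3 * Ec) - (\<Sum>j\<in>{1..l}. ?r1 j) + (\<Sum>j\<le>l. ?r2 j) + (\<Sum>j\<le>l. ?r3 j) + (\<Sum>j\<le>l. ?r4 j)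
      = (\<Sum>j<l. - ?r1 (Suc j) + ?r2 j + ?r3 j + ?r4 j) + (?r2 l + ?r3 l + ?r4 l) + \<epsilon> 0"
    unfolding sum_atLeast1_atMost_shift sum_atMost_split_last sum.distrib sum_negf
    by (simp add: \<epsilon>_def)
  also have "\<dots> = (\<Sum>j<l. (\<epsilon> (Suc j) - \<epsilon> j) + (\<eta> j - \<eta> (Suc j))) + (- \<epsilon> l + \<eta> l) + \<epsilon> 0"
    unfolding last by (rule arg_cong[where f = "\<lambda>x. x + _ + _"], rule sum.cong[OF refl], rule block) simp
  also have "\<dots> = \<eta> 0"
    by (simp add: sum.distrib sum_lessThan_telescope sum_lessThan_telescope')
  finally show ?thesis
    by (simp add: \<eta>_def)
qed

lemma DERIV_power_mult:
  assumes "(f has_real_derivative D) (at t)"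
  shows "((\<lambda>s. s ^ n * f s) has_real_derivative real n * t ^ (n - 1) * f t + t ^ n * D) (at t)"
  by (rule DERIV_cong[OF DERIV_mult[OF DERIV_pow assms]]) simp

lemma DERIV_power_divide_mult:
  assumes "(f has_real_derivative D) (at t)"
  shows "((\<lambda>s. s ^ n / c * f s) has_real_derivative real n * t ^ (n - 1) / c * f t + t ^ n / c * D) (at t)"
  by (rule DERIV_cong[OF DERIV_mult[OF DERIV_cdivide[OF DERIV_pow] assms]]) simp

text \<open>In the applications A, B, H, S are the cubic, quadratic, linear and Q-contracted parts
  of the integral along a solution, and E, F, Wc, Pd, GD are the values the hypotheses of the
  theorem give for their derivatives.\<close>

lemma DERIV_J31_eq_0:
  fixes A B H S :: "nat \<Rightarrow> real \<Rightarrow> real" and E F Wc Pd :: "nat \<Rightarrow> real"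
  assumes l: "l \<ge> 1"
    and dA: "\<And>j. j < l \<Longrightarrow> (A (2*j) has_real_derivative -3 * E (2*j)) (at t)"
    and dB: "\<And>j. j \<le> l \<Longrightarrow> (B (2*j) has_real_derivative A (2*j) t - 2 * F (2*j)) (at t)"
    and dH: "\<And>j. j \<in> {1..l} \<Longrightarrow> (H (2*j-1) has_real_derivative Wc (2*j-1) - S (2*j-1) t) (at t)"
    and dS: "\<And>j. j \<in> {1..l} \<Longrightarrow> (S (2*j-1) has_real_derivative Pd (2*j-1)) (at t)"
    and dG: "(G has_real_derivative GD) (at t)"
    and A_top: "A (2*l) t = 0"
    and Wc: "\<And>j. j < l \<Longrightarrow> Wc (2*j+1) = - (3 / real (2*j+1)) * E (2*j) - real (2*j+2) * B (2*j+2) t"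
    and Pd_top: "Pd (2*l-1) = 4 * real l * F (2*l)"
    and Pd: "\<And>j. Suc j < l \<Longrightarrow>
      Pd (2*j+1) = 2 * real (2*j+2) * F (2*j+2) - real (2*j+3) * real (2*j+2) * H (2*j+3) t"
    and GD: "GD = 2 * F 0 - H 1 t"
  shows "((\<lambda>s. - (\<Sum>j<l. s^(2*j+1) / real (2*j+1) * A (2*j) s) + (\<Sum>j\<le>l. s^(2*j) * B (2*j) s)
      + (\<Sum>j\<in>{1..l}. s^(2*j-1) * H (2*j-1) s) + (\<Sum>j\<in>{1..l}. s^(2*j) / real (2*j) * S (2*j-1) s) + G s)
    has_real_derivative 0) (at t)"
proof -
  have "((\<lambda>s. - (\<Sum>j<l. s^(2*j+1) / real (2*j+1) * A (2*j) s) + (\<Sum>j\<le>l. s^(2*j) * B (2*j) s)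
      + (\<Sum>j\<in>{1..l}. s^(2*j-1) * H (2*j-1) s) + (\<Sum>j\<in>{1..l}. s^(2*j) / real (2*j) * S (2*j-1) s) + G s)
    has_real_derivative
      - (\<Sum>j<l. real (2*j+1) * t^(2*j+1-1) / real (2*j+1) * A (2*j) t + t^(2*j+1) / real (2*j+1) * (-3 * E (2*j)))
      + (\<Sum>j\<le>l. real (2*j) * t^(2*j-1) * B (2*j) t + t^(2*j) * (A (2*j) t - 2 * F (2*j)))
      + (\<Sum>j\<in>{1..l}. real (2*j-1) * t^(2*j-1-1) * H (2*j-1) t + t^(2*j-1) * (Wc (2*j-1) - S (2*j-1) t))
      + (\<Sum>j\<in>{1..l}. real (2*j) * t^(2*j-1) / real (2*j) * S (2*j-1) t + t^(2*j) / real (2*j) * Pd (2*j-1))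
      + GD) (at t)"
    by (intro DERIV_add DERIV_minus DERIV_sum DERIV_power_mult DERIV_power_divide_mult dA dB dH dS dG) auto
  then show ?thesis
    using J31_derivative_telescopes[where A="\<lambda>N. A N t" and B="\<lambda>N. B N t" and H="\<lambda>N. H N t"
        and S="\<lambda>N. S N t", OF l A_top Wc Pd_top Pd GD] by simp
qed

lemma DERIV_J32_eq_0:
  fixes A B H S :: "nat \<Rightarrow> real \<Rightarrow> real" and E F Wc Pd :: "nat \<Rightarrow> real"
  assumes dK: "(K has_real_derivative -3 * Ec) (at t)"
    and dA: "\<And>j. j \<in> {1..l} \<Longrightarrow> (A (2*j-1) has_real_derivative -3 * E (2*j-1)) (at t)"
    and dB: "\<And>j. j \<le> l \<Longrightarrow> (B (2*j+1) has_real_derivative A (2*j+1) t - 2 * F (2*j+1)) (at t)"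
    and dH: "\<And>j. j \<le> l \<Longrightarrow> (H (2*j) has_real_derivative Wc (2*j) - S (2*j) t) (at t)"
    and dS: "\<And>j. j \<le> l \<Longrightarrow> (S (2*j) has_real_derivative Pd (2*j)) (at t)"
    and A_top: "A (2*l+1) t = 0"
    and Wc_0: "Wc 0 = 3 * Ec - B 1 t"
    and Wc: "\<And>j. 1 \<le> j \<Longrightarrow> j \<le> l \<Longrightarrow>
      Wc (2*j) = - (3 / real (2*j)) * E (2*j-1) - real (2*j+1) * B (2*j+1) t"
    and Pd_top: "Pd (2*l) = 2 * real (2*l+1) * F (2*l+1)"
    and Pd: "\<And>j. j < l \<Longrightarrow>
      Pd (2*j) = 2 * real (2*j+1) * F (2*j+1) - real (2*j+2) * real (2*j+1) * H (2*j+2) t"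
  shows "((\<lambda>s. (K s - (\<Sum>j\<in>{1..l}. s^(2*j) / real (2*j) * A (2*j-1) s))
      + (\<Sum>j\<le>l. s^(2*j+1) * B (2*j+1) s) + (\<Sum>j\<le>l. s^(2*j) * H (2*j) s)
      + (\<Sum>j\<le>l. s^(2*j+1) / real (2*j+1) * S (2*j) s))
    has_real_derivative 0) (at t)"
proof -
  have "((\<lambda>s. (K s - (\<Sum>j\<in>{1..l}. s^(2*j) / real (2*j) * A (2*j-1) s))
      + (\<Sum>j\<le>l. s^(2*j+1) * B (2*j+1) s) + (\<Sum>j\<le>l. s^(2*j) * H (2*j) s)
      + (\<Sum>j\<le>l. s^(2*j+1) / real (2*j+1) * S (2*j) s))
    has_real_derivative
      (-3 * Ec) - (\<Sum>j\<in>{1..l}. real (2*j) * t^(2*j-1) / real (2*j) * A (2*j-1) t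
          + t^(2*j) / real (2*j) * (-3 * E (2*j-1)))
      + (\<Sum>j\<le>l. real (2*j+1) * t^(2*j+1-1) * B (2*j+1) t + t^(2*j+1) * (A (2*j+1) t - 2 * F (2*j+1)))
      + (\<Sum>j\<le>l. real (2*j) * t^(2*j-1) * H (2*j) t + t^(2*j) * (Wc (2*j) - S (2*j) t))
      + (\<Sum>j\<le>l. real (2*j+1) * t^(2*j+1-1) / real (2*j+1) * S (2*j) t
          + t^(2*j+1) / real (2*j+1) * Pd (2*j))) (at t)"
    by (intro DERIV_add DERIV_diff DERIV_sum DERIV_power_mult DERIV_power_divide_mult dK dA dB dH dS) auto
  then show ?thesis
    using J32_derivative_telescopes[where A="\<lambda>N. A N t" and B="\<lambda>N. B N t" and H="\<lambda>N. H N t"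
        and S="\<lambda>N. S N t", OF A_top Wc_0 Wc Pd_top Pd] by simp
qed

lemma DERIV_exp_eq_0:
  assumes lam: "lam \<noteq> 0"
    and dA: "(A has_real_derivative -3 * E) (at t)"
    and dB: "(B has_real_derivative A t - 2 * F) (at t)"
    and dH: "(H has_real_derivative Wc - S t) (at t)"
    and dS: "(S has_real_derivative Pd) (at t)"
    and Wc: "Wc = - (3 / lam) * E - lam * B t"
    and Pd: "Pd = 2 * lam * F - lam\<^sup>2 * H t"
  shows "((\<lambda>s. exp (lam * s) * (- A s + lam * B s + lam * H s + S s)) has_real_derivative 0) (at t)"
proof -
  have "((\<lambda>s. exp (lam * s)) has_real_derivative lam * exp (lam * t)) (at t)"
    by (auto intro!: derivative_eq_intros)
  moreover have "((\<lambda>s. - A s + lam * B s + lam * H s + S s) has_real_derivative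
      - (-3 * E) + lam * (A t - 2 * F) + lam * (Wc - S t) + Pd) (at t)"
    by (intro DERIV_add DERIV_minus DERIV_cmult dA dB dH dS)
  ultimately show ?thesis
    by (rule DERIV_cong[OF DERIV_mult]) (use lam in \<open>simp add: Wc Pd field_simps power2_eq_square\<close>)
qed

section \<open>The three families of first integrals\<close>

lemma first_integral_I3e:
  assumes metric: "metric_on U g" and Q_smooth: "smooth1 U (\<lambda>x a. Q x $ a)"
    and lam: "lam \<noteq> 0"
    and L2_smooth: "smooth2 U L2" and L2_sym: "\<forall>x\<in>U. \<forall>a b. L2 x a b = L2 x b a"
    and killing: "killing3 U g (symcd2 g L2)"
    and L1_smooth: "smooth1 U L1"
    and L1_eq: "\<forall>x\<in>U. \<forall>a b. sym2 (cd1 g L1 x) a b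
      = - (3 / lam) * (\<Sum>c\<in>UNIV. symcd2 g L2 x a b c * Q x $ c) - lam * L2 x a b"
    and L1Q_eq: "\<forall>x\<in>U. \<forall>a. pd (\<lambda>y. \<Sum>c\<in>UNIV. L1 y c * Q y $ c) a x
      = 2 * lam * (\<Sum>b\<in>UNIV. L2 x a b * Q x $ b) - lam^2 * L1 x a"
  shows "first_integral U g Q (\<lambda>t x v. exp (lam * t) *
      (- (\<Sum>a\<in>UNIV. \<Sum>b\<in>UNIV. \<Sum>c\<in>UNIV. symcd2 g L2 x a b c * v$a * v$b * v$c)
       + lam * (\<Sum>a\<in>UNIV. \<Sum>b\<in>UNIV. L2 x a b * v$a * v$b)
       + lam * (\<Sum>a\<in>UNIV. L1 x a * v$a)
       + (\<Sum>a\<in>UNIV. L1 x a * Q x $ a)))"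
proof -
  have "((\<lambda>s. exp (lam * s) * (- cubic_form (symcd2 g L2) (q s) (v s) + lam * quad_form L2 (q s) (v s)
      + lam * lin_form L1 (q s) (v s) + lin_form L1 (q s) (Q (q s)))) has_real_derivative 0) (at t)"
    if "is_solution U g Q I q v" and "t \<in> I" for I q v t
  proof -
    interpret solution_point U g Q q v t
      using Q_smooth solution_point_if_is_solution that by blast
    let ?x = "q t" and ?w = "v t" and ?P = "Q (q t)"
    let ?A = "\<lambda>s. cubic_form (symcd2 g L2) (q s) (v s)" and ?B = "\<lambda>s. quad_form L2 (q s) (v s)"
      and ?H = "\<lambda>s. lin_form L1 (q s) (v s)" and ?S = "\<lambda>s. lin_form L1 (q s) (Q (q s))"
      and ?E = "cubic_polar (symcd2 g L2) ?x ?w ?P" and ?F = "quad_polar L2 ?x ?w ?P"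
      and ?Wc = "quad_form (\<lambda>x a b. sym2 (cd1 g L1 x) a b) ?x ?w"
      and ?Pd = "lin_form (\<lambda>y a. pd (\<lambda>y. lin_form L1 y (Q y)) a y) ?x ?w"
    show ?thesis
    proof (rule DERIV_exp_eq_0[where A = ?A and B = ?B and H = ?H and S = ?S
          and E = ?E and F = ?F and Wc = ?Wc and Pd = ?Pd, OF lam])
      show "(?A has_real_derivative -3 * ?E) (at t)"
        by (rule DERIV_cubic_form_killing3[OF killing symcd2_differentiable[OF metric in_chart L2_smooth]])
      from L2_sym in_chart show "(?B has_real_derivative ?A t - 2 * ?F) (at t)"
        by (intro DERIV_quad_form[OF L2_smooth]) blast
      show "(?H has_real_derivative ?Wc - ?S t) (at t)"
        by (rule DERIV_lin_form[OF L1_smooth])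
      show "(?S has_real_derivative ?Pd) (at t)"
        by (rule DERIV_position[OF lin_form_Q_differentiable[OF L1_smooth]])
      from L1_eq in_chart show "?Wc = - (3 / lam) * ?E - lam * ?B t"
        by (intro quad_form_combination) blast
      from L1Q_eq in_chart show "?Pd = 2 * lam * ?F - lam\<^sup>2 * ?H t"
        by (intro lin_form_combination) (simp add: lin_form_def)
    qed
  qed
  then show ?thesis
    unfolding first_integral_def cubic_form_def quad_form_def lin_form_def by blast
qed

lemma first_integral_J31:
  assumes metric: "metric_on U g" and Q_smooth: "smooth1 U (\<lambda>x a. Q x $ a)"
    and l: "l \<ge> 1"
    and L2: "\<forall>N. even N \<and> N \<le> 2*l \<longrightarrow> smooth2 U (L2 N) \<and> (\<forall>x\<in>U. \<forall>a b. L2 N x a b = L2 N x b a)"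
    and killing: "\<forall>N. even N \<and> N \<le> 2*l - 2 \<longrightarrow> killing3 U g (symcd2 g (L2 N))"
    and killing_top: "killing2 U g (L2 (2*l))"
    and L1: "\<forall>A. odd A \<and> A \<le> 2*l - 1 \<longrightarrow> smooth1 U (L1 A)"
    and G: "smooth_on_chart U G"
    and L1_eq: "\<forall>k. even k \<and> 2 \<le> k \<and> k \<le> 2*l \<longrightarrow> (\<forall>x\<in>U. \<forall>a b.
      sym2 (cd1 g (L1 (k-1)) x) a b
        = - (3 / real (k-1)) * (\<Sum>c\<in>UNIV. symcd2 g (L2 (k-2)) x a b c * Q x $ c) - real k * L2 k x a b)"
    and L1Q_top: "\<forall>x\<in>U. \<forall>a. pd (\<lambda>y. \<Sum>c\<in>UNIV. L1 (2*l-1) y c * Q y $ c) a x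
      = 4 * real l * (\<Sum>b\<in>UNIV. L2 (2*l) x a b * Q x $ b)"
    and L1Q_eq: "\<forall>k. odd k \<and> 3 \<le> k \<and> k \<le> 2*l - 1 \<longrightarrow> (\<forall>x\<in>U. \<forall>a.
      pd (\<lambda>y. \<Sum>c\<in>UNIV. L1 (k-2) y c * Q y $ c) a x
        = 2 * real (k-1) * (\<Sum>b\<in>UNIV. L2 (k-1) x a b * Q x $ b) - real k * real (k-1) * L1 k x a)"
    and G_eq: "\<forall>x\<in>U. \<forall>a. pd G a x = 2 * (\<Sum>b\<in>UNIV. L2 0 x a b * Q x $ b) - L1 1 x a"
  shows "first_integral U g Q (\<lambda>t x v.
      - (\<Sum>j<l. t^(2*j+1) / real (2*j+1) *
           (\<Sum>a\<in>UNIV. \<Sum>b\<in>UNIV. \<Sum>c\<in>UNIV. symcd2 g (L2 (2*j)) x a b c * v$a * v$b * v$c))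
      + (\<Sum>j\<le>l. t^(2*j) * (\<Sum>a\<in>UNIV. \<Sum>b\<in>UNIV. L2 (2*j) x a b * v$a * v$b))
      + (\<Sum>j\<in>{1..l}. t^(2*j-1) * (\<Sum>a\<in>UNIV. L1 (2*j-1) x a * v$a))
      + (\<Sum>j\<in>{1..l}. t^(2*j) / real (2*j) * (\<Sum>c\<in>UNIV. L1 (2*j-1) x c * Q x $ c))
      + G x)"
proof -
  have "((\<lambda>s. - (\<Sum>j<l. s^(2*j+1) / real (2*j+1) * cubic_form (symcd2 g (L2 (2*j))) (q s) (v s))
      + (\<Sum>j\<le>l. s^(2*j) * quad_form (L2 (2*j)) (q s) (v s))
      + (\<Sum>j\<in>{1..l}. s^(2*j-1) * lin_form (L1 (2*j-1)) (q s) (v s))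
      + (\<Sum>j\<in>{1..l}. s^(2*j) / real (2*j) * lin_form (L1 (2*j-1)) (q s) (Q (q s)))
      + G (q s)) has_real_derivative 0) (at t)"
    if "is_solution U g Q I q v" and "t \<in> I" for I q v t
  proof -
    interpret solution_point U g Q q v t
      using Q_smooth solution_point_if_is_solution that by blast
    let ?x = "q t" and ?w = "v t" and ?P = "Q (q t)"
    let ?A = "\<lambda>N s. cubic_form (symcd2 g (L2 N)) (q s) (v s)" and ?B = "\<lambda>N s. quad_form (L2 N) (q s) (v s)"
      and ?H = "\<lambda>N s. lin_form (L1 N) (q s) (v s)" and ?S = "\<lambda>N s. lin_form (L1 N) (q s) (Q (q s))"
      and ?E = "\<lambda>N. cubic_polar (symcd2 g (L2 N)) ?x ?w ?P" and ?F = "\<lambda>N. quad_polar (L2 N) ?x ?w ?P"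
      and ?Wc = "\<lambda>N. quad_form (\<lambda>x a b. sym2 (cd1 g (L1 N) x) a b) ?x ?w"
      and ?Pd = "\<lambda>N. lin_form (\<lambda>y a. pd (\<lambda>y. lin_form (L1 N) y (Q y)) a y) ?x ?w"
      and ?GD = "lin_form (\<lambda>y a. pd G a y) ?x ?w"
    show ?thesis
    proof (rule DERIV_J31_eq_0[where A = ?A and B = ?B and H = ?H and S = ?S and G = "\<lambda>s. G (q s)"
          and E = ?E and F = ?F and Wc = ?Wc and Pd = ?Pd and GD = ?GD, OF l])
      fix j assume "j < l"
      with L2 killing show "(?A (2*j) has_real_derivative -3 * ?E (2*j)) (at t)"
        by (intro DERIV_cubic_form_killing3 symcd2_differentiable[OF metric in_chart]) auto
    next
      fix j assume "j \<le> l"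
      with L2 in_chart show "(?B (2*j) has_real_derivative ?A (2*j) t - 2 * ?F (2*j)) (at t)"
        by (intro DERIV_quad_form) auto
    next
      fix j :: nat assume "j \<in> {1..l}"
      with L1 have "smooth1 U (L1 (2*j-1))" by auto
      then show "(?H (2*j-1) has_real_derivative ?Wc (2*j-1) - ?S (2*j-1) t) (at t)"
        and "(?S (2*j-1) has_real_derivative ?Pd (2*j-1)) (at t)"
        by (rule DERIV_lin_form, rule DERIV_position[OF lin_form_Q_differentiable])
    next
      show "((\<lambda>s. G (q s)) has_real_derivative ?GD) (at t)"
        by (rule DERIV_position[OF smooth_on_chart_differentiable[OF G in_chart]])
    next
      show "?A (2*l) t = 0"
        by (rule cubic_form_symcd2_killing2[OF killing_top in_chart])
    next
      fix j assume "j < l"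
      with L1_eq[rule_format, of "2*j+2"] in_chart
      show "?Wc (2*j+1) = - (3 / real (2*j+1)) * ?E (2*j) - real (2*j+2) * ?B (2*j+2) t"
        by (intro quad_form_combination) simp
    next
      from L1Q_top in_chart show "?Pd (2*l-1) = 4 * real l * ?F (2*l)"
        by (intro lin_form_eq_quad_polar) (simp add: lin_form_def)
    next
      fix j assume "Suc j < l"
      with L1Q_eq[rule_format, of "2*j+3"] in_chart
      show "?Pd (2*j+1) = 2 * real (2*j+2) * ?F (2*j+2) - real (2*j+3) * real (2*j+2) * ?H (2*j+3) t"
        by (intro lin_form_combination) (simp add: lin_form_def mult.assoc)
    next
      from G_eq in_chart have "?GD = 2 * ?F 0 - 1 * ?H 1 t"
        by (intro lin_form_combination) simp
      then show "?GD = 2 * ?F 0 - ?H 1 t"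
        by simp
    qed
  qed
  then show ?thesis
    unfolding first_integral_def cubic_form_def quad_form_def lin_form_def by blast
qed

lemma cubic_form_diff_sum:
  "(\<Sum>a\<in>UNIV. \<Sum>b\<in>UNIV. \<Sum>c\<in>UNIV. (C x a b c - (\<Sum>j\<in>J. f j * D j x a b c)) * w $ a * w $ b * w $ c)
     = cubic_form C x w - (\<Sum>j\<in>J. f j * cubic_form (D j) x w)"
proof -
  have "(\<Sum>a\<in>UNIV. \<Sum>b\<in>UNIV. \<Sum>c\<in>UNIV. (\<Sum>j\<in>J. f j * D j x a b c) * w $ a * w $ b * w $ c)
      = (\<Sum>a\<in>UNIV. \<Sum>b\<in>UNIV. \<Sum>c\<in>UNIV. \<Sum>j\<in>J. f j * (D j x a b c * w $ a * w $ b * w $ c))"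
    by (simp add: sum_distrib_left sum_distrib_right mult_ac)
  also have "\<dots> = (\<Sum>j\<in>J. \<Sum>a\<in>UNIV. \<Sum>b\<in>UNIV. \<Sum>c\<in>UNIV. f j * (D j x a b c * w $ a * w $ b * w $ c))"
    by (simp only: sum.swap[where B = J])
  finally show ?thesis
    unfolding cubic_form_def by (simp add: left_diff_distrib sum_subtractf sum_distrib_left)
qed

lemma first_integral_J32:
  assumes metric: "metric_on U g" and Q_smooth: "smooth1 U (\<lambda>x a. Q x $ a)"
    and L3_smooth: "smooth3 U L3" and L3_killing: "killing3 U g L3"
    and L2: "\<forall>N. odd N \<and> N \<le> 2*l+1 \<longrightarrow> smooth2 U (L2 N) \<and> (\<forall>x\<in>U. \<forall>a b. L2 N x a b = L2 N x b a)"
    and killing: "\<forall>N. odd N \<and> N + 1 \<le> 2*l \<longrightarrow> killing3 U g (symcd2 g (L2 N))"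
    and killing_top: "killing2 U g (L2 (2*l+1))"
    and L1: "\<forall>A. even A \<and> A \<le> 2*l \<longrightarrow> smooth1 U (L1 A)"
    and L1_eq_0: "\<forall>x\<in>U. \<forall>a b. sym2 (cd1 g (L1 0) x) a b
      = 3 * (\<Sum>c\<in>UNIV. L3 x a b c * Q x $ c) - L2 1 x a b"
    and L1_eq: "\<forall>k. odd k \<and> 3 \<le> k \<and> k \<le> 2*l+1 \<longrightarrow> (\<forall>x\<in>U. \<forall>a b.
      sym2 (cd1 g (L1 (k-1)) x) a b
        = - (3 / real (k-1)) * (\<Sum>c\<in>UNIV. symcd2 g (L2 (k-2)) x a b c * Q x $ c) - real k * L2 k x a b)"
    and L1Q_top: "\<forall>x\<in>U. \<forall>a. pd (\<lambda>y. \<Sum>c\<in>UNIV. L1 (2*l) y c * Q y $ c) a x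
      = 2 * real (2*l+1) * (\<Sum>b\<in>UNIV. L2 (2*l+1) x a b * Q x $ b)"
    and L1Q_eq: "\<forall>k. even k \<and> 2 \<le> k \<and> k \<le> 2*l \<longrightarrow> (\<forall>x\<in>U. \<forall>a.
      pd (\<lambda>y. \<Sum>c\<in>UNIV. L1 (k-2) y c * Q y $ c) a x
        = 2 * real (k-1) * (\<Sum>b\<in>UNIV. L2 (k-1) x a b * Q x $ b) - real k * real (k-1) * L1 k x a)"
  shows "first_integral U g Q (\<lambda>t x v.
      (\<Sum>a\<in>UNIV. \<Sum>b\<in>UNIV. \<Sum>c\<in>UNIV.
         (L3 x a b c - (\<Sum>j\<in>{1..l}. t^(2*j) / real (2*j) * symcd2 g (L2 (2*j-1)) x a b c))
         * v$a * v$b * v$c)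
      + (\<Sum>j\<le>l. t^(2*j+1) * (\<Sum>a\<in>UNIV. \<Sum>b\<in>UNIV. L2 (2*j+1) x a b * v$a * v$b))
      + (\<Sum>j\<le>l. t^(2*j) * (\<Sum>a\<in>UNIV. L1 (2*j) x a * v$a))
      + (\<Sum>j\<le>l. t^(2*j+1) / real (2*j+1) * (\<Sum>c\<in>UNIV. L1 (2*j) x c * Q x $ c)))"
proof -
  have cubic_part: "(\<Sum>a\<in>UNIV. \<Sum>b\<in>UNIV. \<Sum>c\<in>UNIV.
      (L3 x a b c - (\<Sum>j\<in>{1..l}. t^(2*j) / real (2*j) * symcd2 g (L2 (2*j-1)) x a b c)) * w$a * w$b * w$c)
    = cubic_form L3 x w - (\<Sum>j\<in>{1..l}. t^(2*j) / real (2*j) * cubic_form (symcd2 g (L2 (2*j-1))) x w)"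
    for t x w
    by (rule cubic_form_diff_sum)
  have "((\<lambda>s. (cubic_form L3 (q s) (v s)
        - (\<Sum>j\<in>{1..l}. s^(2*j) / real (2*j) * cubic_form (symcd2 g (L2 (2*j-1))) (q s) (v s)))
      + (\<Sum>j\<le>l. s^(2*j+1) * quad_form (L2 (2*j+1)) (q s) (v s))
      + (\<Sum>j\<le>l. s^(2*j) * lin_form (L1 (2*j)) (q s) (v s))
      + (\<Sum>j\<le>l. s^(2*j+1) / real (2*j+1) * lin_form (L1 (2*j)) (q s) (Q (q s))))
      has_real_derivative 0) (at t)"
    if "is_solution U g Q I q v" and "t \<in> I" for I q v t
  proof -
    interpret solution_point U g Q q v t
      using Q_smooth solution_point_if_is_solution that by blast
    let ?x = "q t" and ?w = "v t" and ?P = "Q (q t)"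
    let ?A = "\<lambda>N s. cubic_form (symcd2 g (L2 N)) (q s) (v s)" and ?B = "\<lambda>N s. quad_form (L2 N) (q s) (v s)"
      and ?H = "\<lambda>N s. lin_form (L1 N) (q s) (v s)" and ?S = "\<lambda>N s. lin_form (L1 N) (q s) (Q (q s))"
      and ?E = "\<lambda>N. cubic_polar (symcd2 g (L2 N)) ?x ?w ?P" and ?F = "\<lambda>N. quad_polar (L2 N) ?x ?w ?P"
      and ?Wc = "\<lambda>N. quad_form (\<lambda>x a b. sym2 (cd1 g (L1 N) x) a b) ?x ?w"
      and ?Pd = "\<lambda>N. lin_form (\<lambda>y a. pd (\<lambda>y. lin_form (L1 N) y (Q y)) a y) ?x ?w"
      and ?Ec = "cubic_polar L3 ?x ?w ?P"
    show ?thesis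
    proof (rule DERIV_J32_eq_0[where A = ?A and B = ?B and H = ?H and S = ?S
          and E = ?E and F = ?F and Wc = ?Wc and Pd = ?Pd and Ec = ?Ec])
      show "((\<lambda>s. cubic_form L3 (q s) (v s)) has_real_derivative -3 * ?Ec) (at t)"
        by (rule DERIV_cubic_form_killing3[OF L3_killing smooth3_differentiable[OF L3_smooth in_chart]])
    next
      fix j :: nat assume "j \<in> {1..l}"
      with L2 killing show "(?A (2*j-1) has_real_derivative -3 * ?E (2*j-1)) (at t)"
        by (intro DERIV_cubic_form_killing3 symcd2_differentiable[OF metric in_chart]) auto
    next
      fix j assume "j \<le> l"
      with L2 in_chart show "(?B (2*j+1) has_real_derivative ?A (2*j+1) t - 2 * ?F (2*j+1)) (at t)"
        by (intro DERIV_quad_form) auto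
    next
      fix j assume "j \<le> l"
      with L1 have "smooth1 U (L1 (2*j))" by auto
      then show "(?H (2*j) has_real_derivative ?Wc (2*j) - ?S (2*j) t) (at t)"
        and "(?S (2*j) has_real_derivative ?Pd (2*j)) (at t)"
        by (rule DERIV_lin_form, rule DERIV_position[OF lin_form_Q_differentiable])
    next
      show "?A (2*l+1) t = 0"
        by (rule cubic_form_symcd2_killing2[OF killing_top in_chart])
    next
      from L1_eq_0 in_chart have "?Wc 0 = 3 * ?Ec - 1 * ?B 1 t"
        by (intro quad_form_combination) simp
      then show "?Wc 0 = 3 * ?Ec - ?B 1 t"
        by simp
    next
      fix j :: nat assume "1 \<le> j" "j \<le> l"
      with L1_eq[rule_format, of "2*j+1"] in_chart
      show "?Wc (2*j) = - (3 / real (2*j)) * ?E (2*j-1) - real (2*j+1) * ?B (2*j+1) t"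
        by (intro quad_form_combination) simp
    next
      from L1Q_top in_chart show "?Pd (2*l) = 2 * real (2*l+1) * ?F (2*l+1)"
        by (intro lin_form_eq_quad_polar) (simp add: lin_form_def)
    next
      fix j assume "j < l"
      with L1Q_eq[rule_format, of "2*j+2"] in_chart
      show "?Pd (2*j) = 2 * real (2*j+1) * ?F (2*j+1) - real (2*j+2) * real (2*j+1) * ?H (2*j+2) t"
        by (intro lin_form_combination) (simp add: lin_form_def mult.assoc)
    qed
  qed
  then show ?thesis
    unfolding first_integral_def cubic_part quad_form_def lin_form_def by blast
qed

theorem theorem1:
  fixes U :: "(real^'n::finite) set"
    and g :: "real^'n \<Rightarrow> real^'n^'n"
    and Q :: "real^'n \<Rightarrow> real^'n"
  assumes metric: "metric_on U g"
    and Qsmooth: "smooth1 U (\<lambda>x a. Q x $ a)"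
  shows
   "(\<forall>(l::nat) (L2 :: nat \<Rightarrow> real^'n \<Rightarrow> 'n \<Rightarrow> 'n \<Rightarrow> real) (L1 :: nat \<Rightarrow> real^'n \<Rightarrow> 'n \<Rightarrow> real)
       (G :: real^'n \<Rightarrow> real).
      l \<ge> 1
      \<and> (\<forall>N. even N \<and> N \<le> 2*l \<longrightarrow> smooth2 U (L2 N) \<and> (\<forall>x\<in>U. \<forall>a b. L2 N x a b = L2 N x b a))
      \<and> (\<forall>N. even N \<and> N \<le> 2*l - 2 \<longrightarrow> killing3 U g (symcd2 g (L2 N)))
      \<and> killing2 U g (L2 (2*l))
      \<and> (\<forall>A. odd A \<and> A \<le> 2*l - 1 \<longrightarrow> smooth1 U (L1 A))
      \<and> smooth_on_chart U G
      \<and> (\<forall>k. even k \<and> 2 \<le> k \<and> k \<le> 2*l \<longrightarrow> (\<forall>x\<in>U. \<forall>a b.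
            sym2 (cd1 g (L1 (k-1)) x) a b
              = - (3 / real (k-1)) * (\<Sum>c\<in>UNIV. symcd2 g (L2 (k-2)) x a b c * Q x $ c)
                - real k * L2 k x a b))
      \<and> (\<forall>x\<in>U. \<forall>a. pd (\<lambda>y. \<Sum>c\<in>UNIV. L1 (2*l-1) y c * Q y $ c) a x
            = 4 * real l * (\<Sum>b\<in>UNIV. L2 (2*l) x a b * Q x $ b))
      \<and> (\<forall>k. odd k \<and> 3 \<le> k \<and> k \<le> 2*l - 1 \<longrightarrow> (\<forall>x\<in>U. \<forall>a.
            pd (\<lambda>y. \<Sum>c\<in>UNIV. L1 (k-2) y c * Q y $ c) a x
              = 2 * real (k-1) * (\<Sum>b\<in>UNIV. L2 (k-1) x a b * Q x $ b)
                - real k * real (k-1) * L1 k x a))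
      \<and> (\<forall>x\<in>U. \<forall>a. pd G a x = 2 * (\<Sum>b\<in>UNIV. L2 0 x a b * Q x $ b) - L1 1 x a)
      \<longrightarrow> first_integral U g Q (\<lambda>t x v.
            - (\<Sum>j<l. t^(2*j+1) / real (2*j+1) *
                 (\<Sum>a\<in>UNIV. \<Sum>b\<in>UNIV. \<Sum>c\<in>UNIV. symcd2 g (L2 (2*j)) x a b c * v$a * v$b * v$c))
            + (\<Sum>j\<le>l. t^(2*j) * (\<Sum>a\<in>UNIV. \<Sum>b\<in>UNIV. L2 (2*j) x a b * v$a * v$b))
            + (\<Sum>j\<in>{1..l}. t^(2*j-1) * (\<Sum>a\<in>UNIV. L1 (2*j-1) x a * v$a))
            + (\<Sum>j\<in>{1..l}. t^(2*j) / real (2*j) * (\<Sum>c\<in>UNIV. L1 (2*j-1) x c * Q x $ c))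
            + G x))
  \<and>
   (\<forall>(l::nat) (L3 :: real^'n \<Rightarrow> 'n \<Rightarrow> 'n \<Rightarrow> 'n \<Rightarrow> real)
       (L2 :: nat \<Rightarrow> real^'n \<Rightarrow> 'n \<Rightarrow> 'n \<Rightarrow> real) (L1 :: nat \<Rightarrow> real^'n \<Rightarrow> 'n \<Rightarrow> real).
      smooth3 U L3 \<and> killing3 U g L3
      \<and> (\<forall>N. odd N \<and> N \<le> 2*l+1 \<longrightarrow> smooth2 U (L2 N) \<and> (\<forall>x\<in>U. \<forall>a b. L2 N x a b = L2 N x b a))
      \<and> (\<forall>N. odd N \<and> N + 1 \<le> 2*l \<longrightarrow> killing3 U g (symcd2 g (L2 N)))
      \<and> killing2 U g (L2 (2*l+1))
      \<and> (\<forall>A. even A \<and> A \<le> 2*l \<longrightarrow> smooth1 U (L1 A))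
      \<and> (\<forall>x\<in>U. \<forall>a b. sym2 (cd1 g (L1 0) x) a b
            = 3 * (\<Sum>c\<in>UNIV. L3 x a b c * Q x $ c) - L2 1 x a b)
      \<and> (\<forall>k. odd k \<and> 3 \<le> k \<and> k \<le> 2*l+1 \<longrightarrow> (\<forall>x\<in>U. \<forall>a b.
            sym2 (cd1 g (L1 (k-1)) x) a b
              = - (3 / real (k-1)) * (\<Sum>c\<in>UNIV. symcd2 g (L2 (k-2)) x a b c * Q x $ c)
                - real k * L2 k x a b))
      \<and> (\<forall>x\<in>U. \<forall>a. pd (\<lambda>y. \<Sum>c\<in>UNIV. L1 (2*l) y c * Q y $ c) a x
            = 2 * real (2*l+1) * (\<Sum>b\<in>UNIV. L2 (2*l+1) x a b * Q x $ b))
      \<and> (\<forall>k. even k \<and> 2 \<le> k \<and> k \<le> 2*l \<longrightarrow> (\<forall>x\<in>U. \<forall>a.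
            pd (\<lambda>y. \<Sum>c\<in>UNIV. L1 (k-2) y c * Q y $ c) a x
              = 2 * real (k-1) * (\<Sum>b\<in>UNIV. L2 (k-1) x a b * Q x $ b)
                - real k * real (k-1) * L1 k x a))
      \<longrightarrow> first_integral U g Q (\<lambda>t x v.
            (\<Sum>a\<in>UNIV. \<Sum>b\<in>UNIV. \<Sum>c\<in>UNIV.
               (L3 x a b c - (\<Sum>j\<in>{1..l}. t^(2*j) / real (2*j) * symcd2 g (L2 (2*j-1)) x a b c))
               * v$a * v$b * v$c)
            + (\<Sum>j\<le>l. t^(2*j+1) * (\<Sum>a\<in>UNIV. \<Sum>b\<in>UNIV. L2 (2*j+1) x a b * v$a * v$b))
            + (\<Sum>j\<le>l. t^(2*j) * (\<Sum>a\<in>UNIV. L1 (2*j) x a * v$a))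
            + (\<Sum>j\<le>l. t^(2*j+1) / real (2*j+1) * (\<Sum>c\<in>UNIV. L1 (2*j) x c * Q x $ c))))
  \<and>
   (\<forall>(lam::real) (L2 :: real^'n \<Rightarrow> 'n \<Rightarrow> 'n \<Rightarrow> real) (L1 :: real^'n \<Rightarrow> 'n \<Rightarrow> real).
      lam \<noteq> 0
      \<and> smooth2 U L2 \<and> (\<forall>x\<in>U. \<forall>a b. L2 x a b = L2 x b a)
      \<and> killing3 U g (symcd2 g L2)
      \<and> smooth1 U L1
      \<and> (\<forall>x\<in>U. \<forall>a b. sym2 (cd1 g L1 x) a b
            = - (3 / lam) * (\<Sum>c\<in>UNIV. symcd2 g L2 x a b c * Q x $ c) - lam * L2 x a b)
      \<and> (\<forall>x\<in>U. \<forall>a. pd (\<lambda>y. \<Sum>c\<in>UNIV. L1 y c * Q y $ c) a x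
            = 2 * lam * (\<Sum>b\<in>UNIV. L2 x a b * Q x $ b) - lam^2 * L1 x a)
      \<longrightarrow> first_integral U g Q (\<lambda>t x v. exp (lam * t) *
            (- (\<Sum>a\<in>UNIV. \<Sum>b\<in>UNIV. \<Sum>c\<in>UNIV. symcd2 g L2 x a b c * v$a * v$b * v$c)
             + lam * (\<Sum>a\<in>UNIV. \<Sum>b\<in>UNIV. L2 x a b * v$a * v$b)
             + lam * (\<Sum>a\<in>UNIV. L1 x a * v$a)
             + (\<Sum>a\<in>UNIV. L1 x a * Q x $ a))))"
  by (intro conjI allI impI; elim conjE)
    (rule first_integral_J31[OF metric Qsmooth] first_integral_J32[OF metric Qsmooth]
        first_integral_I3e[OF metric Qsmooth]; assumption)+

end
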